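(* Let $M\in\mathrm{SL}(2,\mathbb Z)$ be a hyperbolic matrix defining a quantum cat map $\hat M$ (setting in the context). Let $0\le\alpha<1/4$ and $r=r(N)=(\log N)^{-\alpha}$. Then quantum ergodicity at scale $r$ holds for all $N\in\mathbb N$: there is a degree bound $D=D(N)$ with $1/D=o(r)$ such that, for majorant/minorant trigonometric polynomials $b^\pm_{x,r}$ of the balls $B_2(x,r)$ with this degree bound (as described in the context), for any choice of eigenbases $\{\phi_j\}_{j=1}^N$ of $\hat M$ in $\mathcal H_N$ there are subsets $S(N)\subset\{1,\dots,N\}$ with $\#S(N)/N\to1$ such that $$\langle\mathrm{Op}_N(b^\pm_{x,r})\phi_j,\phi_j\rangle=\mathrm{Vol}(B_2(x,r))+o(r^2)\quad\text{as }N\to\infty,$$ uniformly for all $x\in\mathbb T^2$ and $j\in S(N)$.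
   Context: Setting. $M=\begin{pmatrix}A&B\\C&D'\end{pmatrix}\in\mathrm{SL}(2,\mathbb Z)$ with $|\mathrm{Tr}\,M|>2$, written as $M=\exp\begin{pmatrix}\gamma&\beta\\-\alpha_0&-\gamma\end{pmatrix}$ with real $\alpha_0,\beta,\gamma$, $\gamma^2>\alpha_0\beta$; Lyapunov exponent $\lambda=\sqrt{\gamma^2-\alpha_0\beta}$. $M$ acts on row vectors $x\mapsto xM$ on $\mathbb T^2=\mathbb R^2/\mathbb Z^2$, $x=(q,p)$. Symplectic product $u\wedge v=u_2v_1-u_1v_2$. With $h=1/N$, $N\in\mathbb N$: $\hat q\psi=q\psi$, $\hat p\psi=\frac{h}{2\pi i}\psi'$, $\hat T_v=\exp(-\frac{2\pi i}{h}(v_1\hat p-v_2\hat q))$, $\hat H=\frac12\alpha_0\hat q^2+\frac12\beta\hat p^2+\frac\gamma2(\hat q\hat p+\hat p\hat q)$, $\hat M=e^{-2\pi i\hat H/h}$. For each $N$ a fixed $\kappa\in\mathbb T^2$ (depending on $M,N$) is chosen so that $\hat M$ preserves the $N$-dimensional Hilbert space $\mathcal H_N$ of distributions $\psi(q)=\sum_{k\in\mathbb Z}\Psi(k)\delta(q-(k+\kappa_1)/N)$, $\Psi(k+N)=e^{-2\pi i\kappa_2}\Psi(k)$, with $\langle\psi,\phi\rangle=\frac1N\sum_{k=1}^N\Psi(k)\overline{\Phi(k)}$. An eigenbasis is an orthonormal basis $\{\phi_j\}_{j=1}^N$ of $\mathcal H_N$ of eigenvectors of $\hat M$. $\hat T_N(n):=\hat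 T_{n/N}$ for $n\in\mathbb Z^2$; for $a(x)=\sum_{n\in\mathbb Z^2}\tilde a(n)e^{2\pi i(n\wedge x)}$ on $\mathbb T^2$, $\mathrm{Op}_N(a)=\sum_n\tilde a(n)\hat T_N(n)$. Majorants/minorants: $B_2(x,r)$ is the geodesic disc of radius $r$ in $\mathbb T^2$; given $D$ with $rD\ge1$, $a_r^\pm$ are trigonometric polynomials on $\mathbb T^2$ with $a_r^-\le\chi_{B_2(0,r)}\le a_r^+$, $\widetilde{a_r^\pm}(n)=0$ for $|n|\ge D$, $\widetilde{a_r^\pm}(0)=\mathrm{Vol}(B_2(0,r))+O(r/D)$, and $|\widetilde{a_r^\pm}(n)|\le cr^2$ for all $n$ with an absolute constant $c$; then $b^\pm_{x,r}(y):=a_r^\pm(y-x)$. *)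

theory Defs
  imports "HOL-Analysis.Analysis"
begin

definition mat_exp :: "real^2^2 \<Rightarrow> real^2^2" where
  "mat_exp X = (\<Sum>k. (1 / fact k) *\<^sub>R (((\<lambda>Y. X ** Y) ^^ k) (mat 1)))"

definition mat22 :: "real \<Rightarrow> real \<Rightarrow> real \<Rightarrow> real \<Rightarrow> real^2^2" where
  "mat22 a b c d = vector [vector [a, b], vector [c, d]]"

definition wedge :: "real \<times> real \<Rightarrow> real \<times> real \<Rightarrow> real" where
  "wedge u v = snd u * fst v - fst u * snd v"

definition ivec :: "int \<times> int \<Rightarrow> real \<times> real" where
  "ivec n = (real_of_int (fst n), real_of_int (snd n))"

text \<open>Row vector times M = (A B; C D'): n M.\<close>
definition rowmul :: "int \<times> int \<Rightarrow> int \<Rightarrow> int \<Rightarrow> int \<Rightarrow> int \<Rightarrow> int \<times> int" where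
  "rowmul n A B C D' = (fst n * A + snd n * C, fst n * B + snd n * D')"

text \<open>A state psi(q) = sum_k Psi(k) delta(q - (k+kappa1)/N) is identified with its
  coefficient sequence Psi :: int => complex.\<close>

definition HN :: "nat \<Rightarrow> real \<times> real \<Rightarrow> (int \<Rightarrow> complex) set" where
  "HN N \<kappa> = {\<Psi>. \<forall>k. \<Psi> (k + int N) = cis (- 2 * pi * snd \<kappa>) * \<Psi> k}"

definition inner_HN :: "nat \<Rightarrow> (int \<Rightarrow> complex) \<Rightarrow> (int \<Rightarrow> complex) \<Rightarrow> complex" where
  "inner_HN N \<Psi> \<Phi> = (1 / of_nat N) * (\<Sum>k\<in>{1..int N}. \<Psi> k * cnj (\<Phi> k))"

text \<open>Action of T_N(n) = T_{n/N} = exp(-2 pi i N (v1 p - v2 q)), v = n/N, on the coefficients: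
  (T_v psi)(q) = exp(2 pi i N v2 q - pi i N v1 v2) psi(q - v1), which gives
  (T_N(n) Psi)(k) = exp(pi i (2 n2 (k + kappa1) - n1 n2) / N) Psi(k - n1).\<close>
definition TN :: "nat \<Rightarrow> real \<times> real \<Rightarrow> int \<times> int \<Rightarrow> (int \<Rightarrow> complex) \<Rightarrow> (int \<Rightarrow> complex)" where
  "TN N \<kappa> n \<Psi> = (\<lambda>k. cis (pi * (2 * real_of_int (snd n) * (real_of_int k + fst \<kappa>)
        - real_of_int (fst n) * real_of_int (snd n)) / real N) * \<Psi> (k - fst n))"

definition trig_eval :: "(int \<times> int \<Rightarrow> complex) \<Rightarrow> real \<times> real \<Rightarrow> complex" where
  "trig_eval a x = (\<Sum>n\<in>{n. a n \<noteq> 0}. a n * cis (2 * pi * wedge (ivec n) x))"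

definition OpN :: "nat \<Rightarrow> real \<times> real \<Rightarrow> (int \<times> int \<Rightarrow> complex) \<Rightarrow> (int \<Rightarrow> complex) \<Rightarrow> (int \<Rightarrow> complex)" where
  "OpN N \<kappa> a \<Psi> = (\<lambda>k. \<Sum>n\<in>{n. a n \<noteq> 0}. a n * TN N \<kappa> n \<Psi> k)"

text \<open>Fourier coefficients of the translate b(y) = a(y - x).\<close>
definition trig_shift :: "(int \<times> int \<Rightarrow> complex) \<Rightarrow> real \<times> real \<Rightarrow> int \<times> int \<Rightarrow> complex" where
  "trig_shift a x n = a n * cis (- 2 * pi * wedge (ivec n) x)"

definition torus_ball :: "real \<times> real \<Rightarrow> real \<Rightarrow> (real \<times> real) set" where
  "torus_ball x r = {y. \<exists>m::int \<times> int. dist y (x + ivec m) < r}"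

definition torus_vol :: "real \<times> real \<Rightarrow> real \<Rightarrow> real" where
  "torus_vol x r = measure lborel (torus_ball x r \<inter> ({0..<1} \<times> {0..<1}))"

definition int_norm :: "int \<times> int \<Rightarrow> real" where
  "int_norm n = sqrt (real_of_int (fst n)^2 + real_of_int (snd n)^2)"

text \<open>U is a quantization of M on H_N(kappa): a unitary operator of H_N satisfying the exact
  Egorov property U^{-1} T_N(n) U = T_N(n M) for all n in Z^2.\<close>
definition is_quantum_cat :: "int \<Rightarrow> int \<Rightarrow> int \<Rightarrow> int \<Rightarrow> nat \<Rightarrow> real \<times> real
    \<Rightarrow> ((int \<Rightarrow> complex) \<Rightarrow> (int \<Rightarrow> complex)) \<Rightarrow> bool" where
  "is_quantum_cat A B C D' N \<kappa> U \<longleftrightarrow>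
     U ` HN N \<kappa> = HN N \<kappa> \<and>
     (\<forall>\<Psi>\<in>HN N \<kappa>. \<forall>\<Phi>\<in>HN N \<kappa>. \<forall>c d.
         U (\<lambda>k. c * \<Psi> k + d * \<Phi> k) = (\<lambda>k. c * U \<Psi> k + d * U \<Phi> k)) \<and>
     (\<forall>\<Psi>\<in>HN N \<kappa>. \<forall>\<Phi>\<in>HN N \<kappa>. inner_HN N (U \<Psi>) (U \<Phi>) = inner_HN N \<Psi> \<Phi>) \<and>
     (\<forall>n. \<forall>\<Psi>\<in>HN N \<kappa>. U (TN N \<kappa> (rowmul n A B C D') \<Psi>) = TN N \<kappa> n (U \<Psi>))"

definition is_eigenbasis :: "nat \<Rightarrow> real \<times> real \<Rightarrow> ((int \<Rightarrow> complex) \<Rightarrow> (int \<Rightarrow> complex))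
    \<Rightarrow> (nat \<Rightarrow> int \<Rightarrow> complex) \<Rightarrow> bool" where
  "is_eigenbasis N \<kappa> U \<phi> \<longleftrightarrow>
     (\<forall>j\<in>{1..N}. \<phi> j \<in> HN N \<kappa>) \<and>
     (\<forall>i\<in>{1..N}. \<forall>j\<in>{1..N}. inner_HN N (\<phi> i) (\<phi> j) = (if i = j then 1 else 0)) \<and>
     (\<forall>\<Psi>\<in>HN N \<kappa>. \<Psi> = (\<lambda>k. \<Sum>j\<in>{1..N}. inner_HN N \<Psi> (\<phi> j) * \<phi> j k)) \<and>
     (\<forall>j\<in>{1..N}. \<exists>\<mu>. U (\<phi> j) = (\<lambda>k. \<mu> * \<phi> j k))"

text \<open>ap N, am N are the Fourier coefficients of a^+_r, a^-_r for r = r N, D = D N.\<close>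
definition admissible_majorants :: "(nat \<Rightarrow> real) \<Rightarrow> (nat \<Rightarrow> real)
    \<Rightarrow> (nat \<Rightarrow> int \<times> int \<Rightarrow> complex) \<Rightarrow> (nat \<Rightarrow> int \<times> int \<Rightarrow> complex) \<Rightarrow> bool" where
  "admissible_majorants r D ap am \<longleftrightarrow>
     (\<exists>c C. \<forall>N. r N * D N \<ge> 1 \<longrightarrow>
        (\<forall>x. Im (trig_eval (ap N) x) = 0 \<and> Im (trig_eval (am N) x) = 0 \<and>
             Re (trig_eval (am N) x) \<le> indicator (torus_ball 0 (r N)) x \<and>
             indicator (torus_ball 0 (r N)) x \<le> Re (trig_eval (ap N) x)) \<and>
        (\<forall>n. int_norm n \<ge> D N \<longrightarrow> ap N n = 0 \<and> am N n = 0) \<and>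
        cmod (ap N 0 - complex_of_real (torus_vol 0 (r N))) \<le> C * r N / D N \<and>
        cmod (am N 0 - complex_of_real (torus_vol 0 (r N))) \<le> C * r N / D N \<and>
        (\<forall>n. cmod (ap N n) \<le> c * (r N)^2 \<and> cmod (am N n) \<le> c * (r N)^2))"

end

theory Submission
  imports Defs "HOL-Real_Asymp.Real_Asymp"
begin

text \<open>
  For an eigenfunction phi of the quantized cat map, the exact Egorov property makes the matrix
  element <T_N(n) phi, phi> constant along the orbit n, nM, nM^2, ... of the frequency n. For
  n \<noteq> 0 the first T ~ log N / (2 log L) orbit points, L the sum of the absolute entries of M,
  are distinct (a hyperbolic matrix has no periodic lattice points) and stay in a box of side N,
  where the translations T_N(m) are orthogonal for the Hilbert--Schmidt inner product. Averaging
  over the orbit and Cauchy--Schwarz give sum_j |<T_N(n) phi_j, phi_j>|^2 \<le> N / T. Summing over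
  the O(D^2) frequencies with 0 < |n| < D = (log N)^beta, alpha < beta < 1/4, Chebyshev's
  inequality shows that all but o(N) eigenfunctions satisfy
  sum_n |<T_N(n) phi_j, phi_j>| \<le> (D^4 / T)^(1/4) = o(1). Since the Fourier coefficients of the
  majorants are O(r^2), for these eigenfunctions
  <Op_N(b) phi_j, phi_j> = Vol + O(r / D) + o(r^2) = Vol + o(r^2).
\<close>

section \<open>Translation invariance of the disc volume\<close>

lemma translation_eq_preimage: "(+) w ` S = {z. z - w \<in> S}" for w :: "'a::ab_group_add"
  by (force simp: image_iff algebra_simps)

lemma ivec_diff: "ivec (m - n) = ivec m - ivec n"
  by (simp add: ivec_def)

lemma torus_ball_translate: "torus_ball x r = (+) x ` torus_ball 0 r"
proof -
  have "dist y (x + ivec m) = dist (y - x) (0 + ivec m)" for y m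
    by (simp add: dist_norm algebra_simps)
  then show ?thesis
    unfolding translation_eq_preimage torus_ball_def by simp
qed

lemma torus_ball_periodic: "y + ivec m \<in> torus_ball 0 r \<longleftrightarrow> y \<in> torus_ball 0 r"
proof -
  have shift: "dist (y + ivec m) (ivec m') = dist y (ivec (m' - m))" for m'
    by (simp add: ivec_diff dist_norm algebra_simps)
  have "(\<exists>m'. dist y (ivec (m' - m)) < r) \<longleftrightarrow> (\<exists>m'. dist y (ivec m') < r)"
    by (metis add_diff_cancel)
  then show ?thesis
    by (simp add: torus_ball_def shift)
qed

lemma open_torus_ball: "open (torus_ball x r)"
proof -
  have "torus_ball x r = (\<Union>m. ball (x + ivec m) r)"
    by (simp add: torus_ball_def set_eq_iff dist_commute)
  then show ?thesis
    by auto
qed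

lemma unit_interval_value_shift_invariant:
  fixes m :: "real \<Rightarrow> real \<Rightarrow> real"
  assumes additive: "\<And>u v w. u \<le> v \<Longrightarrow> v \<le> w \<Longrightarrow> m u w = m u v + m v w"
    and periodic: "\<And>u v k. m (u + of_int k) (v + of_int k) = m u v"
  shows "m a (a + 1) = m 0 1"
proof -
  define k where "k = \<lceil>a\<rceil>"
  have k: "a \<le> of_int k" "of_int k \<le> a + 1"
    unfolding k_def by linarith+
  have "m a (a + 1) = m a k + m k (a + 1)"
    using additive[OF k] .
  also have "m a k = m (a + 1) (k + 1)"
    using periodic[where u = a and v = k and k = 1] by simp
  also have "m (a + 1) (k + 1) + m k (a + 1) = m k (k + 1)"
    using additive[of k "a + 1" "k + 1"] k by simp
  also have "m k (k + 1) = m 0 1"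
    using periodic[where u = 0 and v = 1 and k = k] by (simp add: add.commute)
  finally show ?thesis .
qed

lemma rectangle_in_borel: "({a..<b} \<times> {c..<d} :: (real \<times> real) set) \<in> sets borel"
proof -
  have "({a..<b} \<times> {c..<d} :: (real \<times> real) set) \<in> sets (borel \<Otimes>\<^sub>M borel)"
    by (intro pair_measureI) auto
  then show ?thesis
    by (metis borel_prod)
qed

lemma lmeasurable_Int_rectangle:
  fixes P :: "(real \<times> real) set"
  assumes "P \<in> sets lebesgue"
  shows "P \<inter> ({a..<b} \<times> {c..<d}) \<in> lmeasurable"
proof (rule bounded_set_imp_lmeasurable)
  show "P \<inter> ({a..<b} \<times> {c..<d}) \<in> sets lebesgue"
    using assms rectangle_in_borel by auto
  show "bounded (P \<inter> ({a..<b} \<times> {c..<d}))"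
    by (rule bounded_subset[of "{a..b} \<times> {c..d}"]) (auto intro!: bounded_Times)
qed

lemma measure_Int_translate:
  fixes P :: "'a::euclidean_space set"
  assumes "\<And>y. y + w \<in> P \<longleftrightarrow> y \<in> P"
  shows "measure lebesgue (P \<inter> (+) w ` S) = measure lebesgue (P \<inter> S)"
proof -
  have "(+) w ` P = P"
    using assms[of "_ - w"] by (auto simp: translation_eq_preimage)
  then have "P \<inter> (+) w ` S = (+) w ` (P \<inter> S)"
    by (simp add: translation_Int)
  then show ?thesis
    by (simp add: measure_translation)
qed

lemma measure_periodic_Int_unit_square:
  fixes P :: "(real \<times> real) set"
  assumes P: "P \<in> sets lebesgue" and periodic: "\<And>y m. y + ivec m \<in> P \<longleftrightarrow> y \<in> P"
  shows "measure lebesgue (P \<inter> ({a..<a+1} \<times> {b..<b+1}))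
    = measure lebesgue (P \<inter> ({0..<1} \<times> {0..<1}))"
proof -
  let ?m = "\<lambda>u v c d. measure lebesgue (P \<inter> ({u..<v} \<times> {c..<d}))"
  have additive: "?m u w c d = ?m u v c d + ?m v w c d" "?m c d u w = ?m c d u v + ?m c d v w"
    if "u \<le> v" "v \<le> w" for u v w c d
  proof -
    have "P \<inter> ({u..<w} \<times> {c..<d}) = P \<inter> ({u..<v} \<times> {c..<d}) \<union> P \<inter> ({v..<w} \<times> {c..<d})"
      "P \<inter> ({c..<d} \<times> {u..<w}) = P \<inter> ({c..<d} \<times> {u..<v}) \<union> P \<inter> ({c..<d} \<times> {v..<w})"
      using that by auto
    moreover have "P \<inter> ({v..<w} \<times> {c..<d}) - P \<inter> ({u..<v} \<times> {c..<d}) = P \<inter> ({v..<w} \<times> {c..<d})"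
      "P \<inter> ({c..<d} \<times> {v..<w}) - P \<inter> ({c..<d} \<times> {u..<v}) = P \<inter> ({c..<d} \<times> {v..<w})"
      by auto
    ultimately show "?m u w c d = ?m u v c d + ?m v w c d" "?m c d u w = ?m c d u v + ?m c d v w"
      by (simp_all add: measure_Un2 lmeasurable_Int_rectangle[OF P])
  qed
  have periodic': "?m (u + of_int k) (v + of_int k) c d = ?m u v c d"
    "?m c d (u + of_int k) (v + of_int k) = ?m c d u v" for u v c d and k :: int
  proof -
    have "(+) (of_int k, 0) ` ({u..<v} \<times> {c..<d}) = {u + of_int k..<v + of_int k} \<times> {c..<d}"
      "(+) (0, of_int k) ` ({c..<d} \<times> {u..<v}) = {c..<d} \<times> {u + of_int k..<v + of_int k}"
      by (auto simp: translation_eq_preimage)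
    moreover have "measure lebesgue (P \<inter> (+) (of_int k, 0) ` S) = measure lebesgue (P \<inter> S)"
      "measure lebesgue (P \<inter> (+) (0, of_int k) ` S) = measure lebesgue (P \<inter> S)" for S
      using periodic[of _ "(k, 0)"] periodic[of _ "(0, k)"]
      by (simp_all add: measure_Int_translate ivec_def)
    ultimately show "?m (u + of_int k) (v + of_int k) c d = ?m u v c d"
      "?m c d (u + of_int k) (v + of_int k) = ?m c d u v"
      by metis+
  qed
  have "?m a (a + 1) b (b + 1) = ?m 0 1 b (b + 1)"
    using additive(1) periodic'(1)
    by (rule unit_interval_value_shift_invariant[where m = "\<lambda>u v. ?m u v b (b + 1)"])
  also have "\<dots> = ?m 0 1 0 1"
    using additive(2) periodic'(2)
    by (rule unit_interval_value_shift_invariant[where m = "\<lambda>u v. ?m 0 1 u v"])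
  finally show ?thesis .
qed

lemma torus_vol_translate: "torus_vol x r = torus_vol 0 r"
proof -
  let ?P = "torus_ball 0 r"
  have borel: "torus_ball y r \<inter> ({0..<1} \<times> {0..<1}) \<in> sets borel" for y
    using sets.Int[OF borel_open[OF open_torus_ball] rectangle_in_borel] .
  have "torus_ball x r \<inter> ({0..<1} \<times> {0..<1})
      = (+) x ` (?P \<inter> ({- fst x..<- fst x + 1} \<times> {- snd x..<- snd x + 1}))"
    unfolding torus_ball_translate[of x] translation_eq_preimage by (cases x) auto
  then have "torus_vol x r = measure lebesgue (?P \<inter> ({- fst x..<- fst x + 1} \<times> {- snd x..<- snd x + 1}))"
    using borel[of x] by (simp add: torus_vol_def measure_translation flip: measure_completion)
  also have "\<dots> = measure lebesgue (?P \<inter> ({0..<1} \<times> {0..<1}))"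
    using open_torus_ball[of 0 r] torus_ball_periodic by (intro measure_periodic_Int_unit_square) auto
  also have "\<dots> = torus_vol 0 r"
    using borel[of 0] by (simp add: torus_vol_def)
  finally show ?thesis .
qed

section \<open>Orbits of a hyperbolic matrix on frequencies\<close>

definition cat_orbit :: "int \<Rightarrow> int \<Rightarrow> int \<Rightarrow> int \<Rightarrow> int \<times> int \<Rightarrow> nat \<Rightarrow> int \<times> int" where
  "cat_orbit A B C D' n t = ((\<lambda>m. rowmul m A B C D') ^^ t) n"

lemma cat_orbit_0 [simp]: "cat_orbit A B C D' n 0 = n"
  by (simp add: cat_orbit_def)

lemma cat_orbit_Suc [simp]: "cat_orbit A B C D' n (Suc t) = rowmul (cat_orbit A B C D' n t) A B C D'"
  by (simp add: cat_orbit_def)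

lemma inj_rowmul:
  assumes "A * D' - B * C = 1"
  shows "inj (\<lambda>m. rowmul m A B C D')"
proof (rule inj_on_inverseI)
  fix m :: "int \<times> int"
  have "(fst m * A + snd m * C) * D' - (fst m * B + snd m * D') * C = fst m * (A * D' - B * C)"
    "(fst m * B + snd m * D') * A - (fst m * A + snd m * C) * B = snd m * (A * D' - B * C)"
    by algebra+
  then show "rowmul (rowmul m A B C D') D' (- B) (- C) A = m"
    using assms by (simp add: rowmul_def prod_eq_iff algebra_simps)
qed

text \<open>Cayley--Hamilton: \<open>M\<^sup>2 = (tr M) M - 1\<close>.\<close>
lemma rowmul_rowmul:
  assumes "A * D' - B * C = 1"
  shows "rowmul (rowmul m A B C D') A B C D'
    = ((A + D') * fst (rowmul m A B C D') - fst m, (A + D') * snd (rowmul m A B C D') - snd m)"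
  using assms by (simp add: rowmul_def) algebra

lemma periodic_three_term_recurrence_eq_0:
  fixes u :: "nat \<Rightarrow> 'a::linordered_idom"
  assumes rec: "\<And>t. u (t + 2) = \<tau> * u (t + 1) - u t" and \<tau>: "\<bar>\<tau>\<bar> \<ge> 3"
    and s: "s \<ge> 1" and periodic: "u s = u 0" "u (s + 1) = u 1"
  shows "u 0 = 0"
proof -
  define d where "d t = \<bar>u (t + 1)\<bar> - \<bar>u t\<bar>" for t
  \<comment> \<open>\<open>|u|\<close> is convex with second differences at least \<open>|u|\<close> itself, so it cannot return
    to its initial values unless it vanishes.\<close>
  have convex: "\<bar>u (t + 1)\<bar> \<le> d (Suc t) - d t" for t
  proof -
    have "3 * \<bar>u (t + 1)\<bar> \<le> \<bar>\<tau> * u (t + 1)\<bar>"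
      using \<tau> by (simp add: abs_mult mult_right_mono)
    then show ?thesis
      unfolding d_def using rec[of t] abs_triangle_ineq4[of "\<tau> * u (t + 1)" "u t"]
      by (simp add: numeral_2_eq_2)
  qed
  have "(\<Sum>t<s. \<bar>u (t + 1)\<bar>) \<le> (\<Sum>t<s. d (Suc t) - d t)"
    by (intro sum_mono convex)
  also have "\<dots> = d s - d 0"
    by (rule sum_lessThan_telescope)
  also have "\<dots> = 0"
    using periodic by (simp add: d_def)
  finally have "\<forall>t<s. \<bar>u (t + 1)\<bar> = 0"
    using sum_nonneg_eq_0_iff[of "{..<s}" "\<lambda>t. \<bar>u (t + 1)\<bar>"] by (simp add: antisym sum_nonneg)
  moreover have "s - 1 < s"
    using s by simp
  ultimately have "\<bar>u (s - 1 + 1)\<bar> = 0"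
    by blast
  then show ?thesis
    using s periodic by simp
qed

lemma cat_orbit_periodic_imp_eq_0:
  assumes det: "A * D' - B * C = 1" and hyp: "\<bar>A + D'\<bar> > 2"
    and s: "s \<ge> 1" and periodic: "cat_orbit A B C D' n s = n"
  shows "n = 0"
proof -
  have rec: "cat_orbit A B C D' n (t + 2) = ((A + D') * fst (cat_orbit A B C D' n (t + 1)) - fst (cat_orbit A B C D' n t),
    (A + D') * snd (cat_orbit A B C D' n (t + 1)) - snd (cat_orbit A B C D' n t))" for t
    by (simp add: numeral_2_eq_2 rowmul_rowmul[OF det])
  have periodic': "cat_orbit A B C D' n (s + 1) = cat_orbit A B C D' n 1"
    using periodic by simp
  have "fst (cat_orbit A B C D' n 0) = 0" "snd (cat_orbit A B C D' n 0) = 0"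
    using hyp s periodic periodic' rec
    by (intro periodic_three_term_recurrence_eq_0[where \<tau> = "A + D'" and s = s]; simp)+
  then show ?thesis
    by (simp add: prod_eq_iff)
qed

lemma inj_cat_orbit:
  assumes det: "A * D' - B * C = 1" and hyp: "\<bar>A + D'\<bar> > 2" and n: "n \<noteq> 0"
  shows "inj (cat_orbit A B C D' n)"
proof -
  let ?f = "\<lambda>m. rowmul m A B C D'"
  have no_return: "(?f ^^ t) n \<noteq> (?f ^^ t') n" if "t < t'" for t t'
  proof
    assume "(?f ^^ t) n = (?f ^^ t') n"
    then have "(?f ^^ t) ((?f ^^ (t' - t)) n) = (?f ^^ t) n"
      using that by (simp flip: funpow_add comp_apply[of "?f ^^ t"])
    then have "cat_orbit A B C D' n (t' - t) = n"
      using inj_fn[OF inj_rowmul[OF det]] by (simp add: cat_orbit_def inj_eq)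
    then show False
      using cat_orbit_periodic_imp_eq_0[OF det hyp, of "t' - t" n] n that by linarith
  qed
  show ?thesis
    by (rule injI) (metis cat_orbit_def linorder_neqE_nat no_return)
qed

definition int_sup_norm :: "int \<times> int \<Rightarrow> int" where
  "int_sup_norm m = max \<bar>fst m\<bar> \<bar>snd m\<bar>"

lemma int_sup_norm_rowmul_le:
  "int_sup_norm (rowmul m A B C D') \<le> (\<bar>A\<bar> + \<bar>B\<bar> + \<bar>C\<bar> + \<bar>D'\<bar>) * int_sup_norm m"
proof -
  have bound: "\<bar>fst m * a + snd m * c\<bar> \<le> int_sup_norm m * (\<bar>a\<bar> + \<bar>c\<bar>)" for a c
  proof -
    have "\<bar>fst m * a + snd m * c\<bar> \<le> \<bar>fst m\<bar> * \<bar>a\<bar> + \<bar>snd m\<bar> * \<bar>c\<bar>"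
      by (metis abs_mult abs_triangle_ineq)
    also have "\<dots> \<le> int_sup_norm m * \<bar>a\<bar> + int_sup_norm m * \<bar>c\<bar>"
      by (intro add_mono mult_right_mono) (auto simp: int_sup_norm_def)
    finally show ?thesis
      by (simp add: distrib_left)
  qed
  have "0 \<le> int_sup_norm m"
    by (simp add: int_sup_norm_def)
  then have "int_sup_norm m * (\<bar>A\<bar> + \<bar>C\<bar>) \<le> (\<bar>A\<bar> + \<bar>B\<bar> + \<bar>C\<bar> + \<bar>D'\<bar>) * int_sup_norm m"
    "int_sup_norm m * (\<bar>B\<bar> + \<bar>D'\<bar>) \<le> (\<bar>A\<bar> + \<bar>B\<bar> + \<bar>C\<bar> + \<bar>D'\<bar>) * int_sup_norm m"
    by (simp_all add: mult.commute mult_left_mono)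
  moreover have "int_sup_norm (rowmul m A B C D') = max \<bar>fst m * A + snd m * C\<bar> \<bar>fst m * B + snd m * D'\<bar>"
    by (simp add: int_sup_norm_def rowmul_def)
  ultimately show ?thesis
    using bound[of A C] bound[of B D'] by (simp only: max.bounded_iff) (meson order_trans)
qed

lemma int_sup_norm_cat_orbit_le:
  "int_sup_norm (cat_orbit A B C D' n t) \<le> (\<bar>A\<bar> + \<bar>B\<bar> + \<bar>C\<bar> + \<bar>D'\<bar>) ^ t * int_sup_norm n"
proof (induction t)
  case (Suc t)
  have "int_sup_norm (cat_orbit A B C D' n (Suc t))
      \<le> (\<bar>A\<bar> + \<bar>B\<bar> + \<bar>C\<bar> + \<bar>D'\<bar>) * int_sup_norm (cat_orbit A B C D' n t)"
    by (simp add: int_sup_norm_rowmul_le)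
  also have "\<dots> \<le> (\<bar>A\<bar> + \<bar>B\<bar> + \<bar>C\<bar> + \<bar>D'\<bar>) ^ Suc t * int_sup_norm n"
    using mult_left_mono[OF Suc.IH, of "\<bar>A\<bar> + \<bar>B\<bar> + \<bar>C\<bar> + \<bar>D'\<bar>"] by (simp add: mult.assoc)
  finally show ?case .
qed simp

lemma HN_shift:
  assumes "\<Psi> \<in> HN N \<kappa>"
  shows "\<Psi> (k + int N) = cis (- 2 * pi * snd \<kappa>) * \<Psi> k"
  using assms by (simp add: HN_def)

lemma HN_quasi_periodic:
  assumes "\<Psi> \<in> HN N \<kappa>"
  shows "\<Psi> (k + int N * q) = cis (- 2 * pi * snd \<kappa> * of_int q) * \<Psi> k"
proof (induction q rule: int_induct[where k = 0])
  case (step1 i)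
  have "\<Psi> (k + int N * (i + 1)) = cis (- 2 * pi * snd \<kappa>) * \<Psi> (k + int N * i)"
    using HN_shift[OF assms, of "k + int N * i"] by (simp add: algebra_simps)
  then show ?case
    using step1 by (simp add: cis_mult algebra_simps)
next
  case (step2 i)
  have "\<Psi> (k + int N * i) = cis (- 2 * pi * snd \<kappa>) * \<Psi> (k + int N * (i - 1))"
    using HN_shift[OF assms, of "k + int N * (i - 1)"] by (simp add: algebra_simps)
  then have "\<Psi> (k + int N * (i - 1)) = cis (2 * pi * snd \<kappa>) * \<Psi> (k + int N * i)"
    by (simp add: cis_mult flip: mult.assoc)
  then show ?case
    using step2 by (simp add: cis_mult algebra_simps)
qed simp

lemma TN_in_HN:
  assumes "N \<ge> 1" "\<Psi> \<in> HN N \<kappa>"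
  shows "TN N \<kappa> n \<Psi> \<in> HN N \<kappa>"
  unfolding HN_def
proof (intro CollectI allI)
  fix k
  have "cis (pi * (2 * of_int (snd n) * (of_int (k + int N) + fst \<kappa>) - of_int (fst n) * of_int (snd n)) / real N)
     = cis (2 * pi * of_int (snd n)) * cis (pi * (2 * of_int (snd n) * (of_int k + fst \<kappa>) - of_int (fst n) * of_int (snd n)) / real N)"
    using assms(1) by (simp add: cis_mult field_simps)
  moreover have "cis (2 * pi * of_int (snd n)) = 1"
    by (rule cis_multiple_2pi) simp
  moreover have "\<Psi> (k + int N - fst n) = cis (- 2 * pi * snd \<kappa>) * \<Psi> (k - fst n)"
    using HN_shift[OF assms(2), of "k - fst n"] by (simp add: algebra_simps)
  ultimately show "TN N \<kappa> n \<Psi> (k + int N) = cis (- 2 * pi * snd \<kappa>) * TN N \<kappa> n \<Psi> k"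
    by (simp add: TN_def)
qed

lemma TN_0 [simp]: "TN N \<kappa> 0 \<Psi> = \<Psi>"
  by (simp add: TN_def zero_prod_def)

lemma TN_mult: "TN N \<kappa> n (\<lambda>k. \<mu> * \<Psi> k) = (\<lambda>k. \<mu> * TN N \<kappa> n \<Psi> k)"
  by (simp add: TN_def fun_eq_iff algebra_simps)

lemma inner_HN_mult_left: "inner_HN N (\<lambda>k. c * f k) g = c * inner_HN N f g"
  by (simp add: inner_HN_def sum_distrib_left algebra_simps)

lemma inner_HN_mult_right: "inner_HN N f (\<lambda>k. c * g k) = cnj c * inner_HN N f g"
  by (simp add: inner_HN_def sum_distrib_left algebra_simps)

lemma inner_HN_sum_left: "inner_HN N (\<lambda>k. \<Sum>n\<in>S. f n k) g = (\<Sum>n\<in>S. inner_HN N (f n) g)"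
  by (simp add: inner_HN_def sum_distrib_left sum_distrib_right sum.swap[of _ S])

lemma inner_HN_sum_right: "inner_HN N f (\<lambda>k. \<Sum>n\<in>S. g n k) = (\<Sum>n\<in>S. inner_HN N f (g n))"
  by (simp add: inner_HN_def sum_distrib_left sum_distrib_right sum.swap[of _ S])

lemma Re_inner_HN_self: "Re (inner_HN N f f) = (\<Sum>k\<in>{1..int N}. (cmod (f k))\<^sup>2) / real N"
  by (simp add: inner_HN_def complex_mult_cnj cmod_power2 sum_divide_distrib)

lemma inner_HN_Cauchy_Schwarz:
  "(cmod (inner_HN N f g))\<^sup>2 \<le> Re (inner_HN N f f) * Re (inner_HN N g g)"
proof -
  have "cmod (\<Sum>k\<in>{1..int N}. f k * cnj (g k)) \<le> (\<Sum>k\<in>{1..int N}. cmod (f k) * cmod (g k))"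
    using norm_sum[of "\<lambda>k. f k * cnj (g k)"] by (simp add: norm_mult)
  then have "(cmod (\<Sum>k\<in>{1..int N}. f k * cnj (g k)))\<^sup>2 \<le> (\<Sum>k\<in>{1..int N}. cmod (f k) * cmod (g k))\<^sup>2"
    by (simp add: power_mono)
  also have "\<dots> \<le> (\<Sum>k\<in>{1..int N}. (cmod (f k))\<^sup>2) * (\<Sum>k\<in>{1..int N}. (cmod (g k))\<^sup>2)"
    by (rule Cauchy_Schwarz_ineq_sum)
  finally have "(cmod (\<Sum>k\<in>{1..int N}. f k * cnj (g k)))\<^sup>2 / (real N)\<^sup>2
      \<le> (\<Sum>k\<in>{1..int N}. (cmod (f k))\<^sup>2) * (\<Sum>k\<in>{1..int N}. (cmod (g k))\<^sup>2) / (real N)\<^sup>2"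
    by (simp add: divide_right_mono)
  moreover have "(cmod (inner_HN N f g))\<^sup>2 = (cmod (\<Sum>k\<in>{1..int N}. f k * cnj (g k)))\<^sup>2 / (real N)\<^sup>2"
    by (simp add: inner_HN_def norm_divide power_divide)
  ultimately show ?thesis
    by (simp only: Re_inner_HN_self times_divide_times_eq power2_eq_square)
qed

text \<open>Exact Egorov property combined with \<open>|\<mu>| = 1\<close>, which follows from unitarity.\<close>
lemma inner_TN_rowmul_eigenvector:
  assumes N: "N \<ge> 1" and U: "is_quantum_cat A B C D' N \<kappa> U" and \<phi>: "\<phi> \<in> HN N \<kappa>"
    and normalized: "inner_HN N \<phi> \<phi> = 1" and eigen: "U \<phi> = (\<lambda>k. \<mu> * \<phi> k)"
  shows "inner_HN N (TN N \<kappa> (rowmul n A B C D') \<phi>) \<phi> = inner_HN N (TN N \<kappa> n \<phi>) \<phi>"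
proof -
  have unitary: "inner_HN N (U \<Psi>) (U \<Phi>) = inner_HN N \<Psi> \<Phi>" if "\<Psi> \<in> HN N \<kappa>" "\<Phi> \<in> HN N \<kappa>" for \<Psi> \<Phi>
    using U that unfolding is_quantum_cat_def by blast
  have egorov: "U (TN N \<kappa> (rowmul n A B C D') \<phi>) = TN N \<kappa> n (U \<phi>)"
    using U \<phi> unfolding is_quantum_cat_def by blast
  have "\<mu> * cnj \<mu> = 1"
    using unitary[OF \<phi> \<phi>] normalized by (simp add: eigen inner_HN_mult_left inner_HN_mult_right)
  have "inner_HN N (TN N \<kappa> (rowmul n A B C D') \<phi>) \<phi>
      = inner_HN N (U (TN N \<kappa> (rowmul n A B C D') \<phi>)) (U \<phi>)"
    using unitary[OF TN_in_HN[OF N \<phi>] \<phi>] by simp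
  also have "\<dots> = inner_HN N (\<lambda>k. \<mu> * TN N \<kappa> n \<phi> k) (\<lambda>k. \<mu> * \<phi> k)"
    by (simp only: egorov eigen TN_mult)
  also have "\<dots> = \<mu> * cnj \<mu> * inner_HN N (TN N \<kappa> n \<phi>) \<phi>"
    by (simp add: inner_HN_mult_left inner_HN_mult_right)
  finally show ?thesis
    using \<open>\<mu> * cnj \<mu> = 1\<close> by simp
qed

lemma inner_TN_cat_orbit_eigenvector:
  assumes "N \<ge> 1" "is_quantum_cat A B C D' N \<kappa> U" "\<phi> \<in> HN N \<kappa>"
    "inner_HN N \<phi> \<phi> = 1" "U \<phi> = (\<lambda>k. \<mu> * \<phi> k)"
  shows "inner_HN N (TN N \<kappa> (cat_orbit A B C D' n t) \<phi>) \<phi> = inner_HN N (TN N \<kappa> n \<phi>) \<phi>"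
  by (induction t) (simp_all add: inner_TN_rowmul_eigenvector[OF assms])

lemma eigenbasis_in_HN: "is_eigenbasis N \<kappa> U \<phi> \<Longrightarrow> j \<in> {1..N} \<Longrightarrow> \<phi> j \<in> HN N \<kappa>"
  by (simp add: is_eigenbasis_def)

lemma eigenbasis_normalized:
  "is_eigenbasis N \<kappa> U \<phi> \<Longrightarrow> j \<in> {1..N} \<Longrightarrow> inner_HN N (\<phi> j) (\<phi> j) = 1"
  by (simp add: is_eigenbasis_def)

lemma period_representative:
  assumes "N \<ge> 1"
  obtains a0 q where "a0 \<in> {1..int N}" "a = a0 + int N * q"
proof
  have "0 \<le> (a - 1) mod int N" "(a - 1) mod int N < int N"
    using assms by simp_all
  then show "(a - 1) mod int N + 1 \<in> {1..int N}"
    by simp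
  show "a = ((a - 1) mod int N + 1) + int N * ((a - 1) div int N)"
    by (simp add: algebra_simps)
qed

lemma eq_if_mod_eq_on_period:
  fixes k k0 :: int
  assumes "k \<in> {1..int N}" "k0 \<in> {1..int N}" "k mod int N = k0 mod int N"
  shows "k = k0"
proof (rule ccontr)
  assume "k \<noteq> k0"
  moreover have "int N dvd (k - k0)"
    using assms(3) by (simp add: mod_eq_dvd_iff)
  ultimately have "int N \<le> \<bar>k - k0\<bar>"
    using dvd_imp_le_int[of "k - k0" "int N"] by simp
  moreover have "\<bar>k - k0\<bar> < int N"
    using assms(1,2) by (simp add: abs_less_iff)
  ultimately show False
    by linarith
qed

definition delta_HN :: "nat \<Rightarrow> real \<times> real \<Rightarrow> int \<Rightarrow> int \<Rightarrow> complex" where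
  "delta_HN N \<kappa> k0 k =
    (if k mod int N = k0 mod int N then cis (- 2 * pi * snd \<kappa> * of_int ((k - k0) div int N)) else 0)"

lemma delta_HN_in_HN:
  assumes "N \<ge> 1"
  shows "delta_HN N \<kappa> k0 \<in> HN N \<kappa>"
proof -
  have "(k + int N - k0) div int N = (k - k0) div int N + 1" for k
    using assms by (simp add: diff_add_eq[symmetric])
  then show ?thesis
    by (simp add: HN_def delta_HN_def cis_mult algebra_simps)
qed

lemma eigenbasis_completeness:
  assumes N: "N \<ge> 1" and E: "is_eigenbasis N \<kappa> U \<phi>" and k0: "k0 \<in> {1..int N}"
  shows "(\<Sum>j\<in>{1..N}. \<phi> j k * cnj (\<phi> j k0)) = of_nat N * delta_HN N \<kappa> k0 k"
proof -
  have inner: "inner_HN N (delta_HN N \<kappa> k0) (\<phi> j) = cnj (\<phi> j k0) / of_nat N" for j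
  proof -
    have "delta_HN N \<kappa> k0 k = (if k = k0 then 1 else 0)" if "k \<in> {1..int N}" for k
      using eq_if_mod_eq_on_period[OF that k0] by (auto simp: delta_HN_def)
    then have "(\<Sum>k\<in>{1..int N}. delta_HN N \<kappa> k0 k * cnj (\<phi> j k))
        = (\<Sum>k\<in>{1..int N}. if k = k0 then cnj (\<phi> j k0) else 0)"
      by (intro sum.cong) auto
    then have "(\<Sum>k\<in>{1..int N}. delta_HN N \<kappa> k0 k * cnj (\<phi> j k)) = cnj (\<phi> j k0)"
      using k0 by simp
    then show ?thesis
      by (simp add: inner_HN_def)
  qed
  have "delta_HN N \<kappa> k0 = (\<lambda>k. \<Sum>j\<in>{1..N}. inner_HN N (delta_HN N \<kappa> k0) (\<phi> j) * \<phi> j k)"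
    using E delta_HN_in_HN[OF N] unfolding is_eigenbasis_def by blast
  then have "delta_HN N \<kappa> k0 k = (\<Sum>j\<in>{1..N}. cnj (\<phi> j k0) / of_nat N * \<phi> j k)"
    unfolding inner by (rule fun_cong)
  also have "\<dots> = (\<Sum>j\<in>{1..N}. \<phi> j k * cnj (\<phi> j k0)) / of_nat N"
    by (simp add: sum_divide_distrib mult.commute)
  finally show ?thesis
    using N by (simp add: field_simps)
qed

lemma eigenbasis_sum_diagonal:
  assumes N: "N \<ge> 1" and E: "is_eigenbasis N \<kappa> U \<phi>"
  shows "(\<Sum>j\<in>{1..N}. \<phi> j a * cnj (\<phi> j a)) = of_nat N"
proof -
  obtain a0 q where a0: "a0 \<in> {1..int N}" and a: "a = a0 + int N * q"
    using period_representative[OF N] .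
  have "\<phi> j a * cnj (\<phi> j a) = \<phi> j a0 * cnj (\<phi> j a0)" if "j \<in> {1..N}" for j
  proof -
    let ?c = "cis (- 2 * pi * snd \<kappa> * of_int q)"
    have "\<phi> j a * cnj (\<phi> j a) = ?c * cnj ?c * (\<phi> j a0 * cnj (\<phi> j a0))"
      unfolding a HN_quasi_periodic[OF eigenbasis_in_HN[OF E that]] by (simp add: mult_ac)
    moreover have "?c * cnj ?c = 1"
      by (simp add: cis_cnj cis_mult)
    ultimately show ?thesis
      by simp
  qed
  then have "(\<Sum>j\<in>{1..N}. \<phi> j a * cnj (\<phi> j a)) = (\<Sum>j\<in>{1..N}. \<phi> j a0 * cnj (\<phi> j a0))"
    by (rule sum.cong[OF refl])
  also have "\<dots> = of_nat N * delta_HN N \<kappa> a0 a0"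
    by (rule eigenbasis_completeness[OF N E a0])
  finally show ?thesis
    by (simp add: delta_HN_def)
qed

lemma eigenbasis_sum_off_diagonal:
  assumes N: "N \<ge> 1" and E: "is_eigenbasis N \<kappa> U \<phi>" and ab: "a mod int N \<noteq> b mod int N"
  shows "(\<Sum>j\<in>{1..N}. \<phi> j a * cnj (\<phi> j b)) = 0"
proof -
  obtain b0 q where b0: "b0 \<in> {1..int N}" and b: "b = b0 + int N * q"
    using period_representative[OF N] .
  have "\<phi> j a * cnj (\<phi> j b) = cnj (cis (- 2 * pi * snd \<kappa> * of_int q)) * (\<phi> j a * cnj (\<phi> j b0))"
    if "j \<in> {1..N}" for j
    unfolding b HN_quasi_periodic[OF eigenbasis_in_HN[OF E that]] by simp
  then have "(\<Sum>j\<in>{1..N}. \<phi> j a * cnj (\<phi> j b))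
      = (\<Sum>j\<in>{1..N}. cnj (cis (- 2 * pi * snd \<kappa> * of_int q)) * (\<phi> j a * cnj (\<phi> j b0)))"
    by (rule sum.cong[OF refl])
  also have "\<dots> = cnj (cis (- 2 * pi * snd \<kappa> * of_int q)) * (of_nat N * delta_HN N \<kappa> b0 a)"
    by (simp only: eigenbasis_completeness[OF N E b0] flip: sum_distrib_left)
  finally have "(\<Sum>j\<in>{1..N}. \<phi> j a * cnj (\<phi> j b))
      = cnj (cis (- 2 * pi * snd \<kappa> * of_int q)) * (of_nat N * delta_HN N \<kappa> b0 a)" .
  moreover have "a mod int N \<noteq> b0 mod int N"
    using ab by (simp add: b)
  ultimately show ?thesis
    by (simp add: delta_HN_def)
qed

lemma sum_cis_roots_of_unity:
  assumes N: "N \<ge> 1" and d: "\<not> int N dvd d"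
  shows "(\<Sum>k\<in>{1..int N}. cis (2 * pi * of_int d * of_int k / real N)) = 0"
proof -
  define z where "z = cis (2 * pi * of_int d / real N)"
  have z_pow: "z ^ i = cis (2 * pi * of_int d * of_nat i / real N)" for i
    unfolding z_def Complex.DeMoivre by (simp add: algebra_simps)
  have "z ^ N = 1"
    using N by (simp add: z_pow cis_multiple_2pi)
  have "z \<noteq> 1"
  proof
    assume "z = 1"
    then have "exp (\<i> * complex_of_real (2 * pi * of_int d / real N)) = 1"
      by (simp add: z_def cis_conv_exp)
    then obtain n :: int where "2 * pi * of_int d / real N = of_int (2 * n) * pi"
      by (auto simp: exp_eq_1)
    then have "of_int d = real N * of_int n"
      using N by (simp add: field_simps)
    then have "d = int N * n"
      by (metis of_int_eq_iff of_int_mult of_int_of_nat_eq)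
    with d show False
      by simp
  qed
  have "(\<Sum>k\<in>{1..int N}. cis (2 * pi * of_int d * of_int k / real N)) = (\<Sum>i<N. z ^ Suc i)"
  proof -
    have "{1..int N} = int ` Suc ` {..<N}"
      by (simp add: image_Suc_lessThan image_int_atLeastAtMost)
    then show ?thesis
      by (simp add: sum.reindex z_pow del: power_Suc)
  qed
  also have "\<dots> = z * (\<Sum>i<N. z ^ i)"
    by (simp add: sum_distrib_left)
  also have "\<dots> = z * ((z ^ N - 1) / (z - 1))"
    using \<open>z \<noteq> 1\<close> by (simp add: geometric_sum)
  also have "\<dots> = 0"
    using \<open>z ^ N = 1\<close> by simp
  finally show ?thesis .
qed

definition TN_phase :: "nat \<Rightarrow> real \<times> real \<Rightarrow> int \<times> int \<Rightarrow> int \<Rightarrow> real" where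
  "TN_phase N \<kappa> n k =
    pi * (2 * of_int (snd n) * (of_int k + fst \<kappa>) - of_int (fst n) * of_int (snd n)) / real N"

lemma TN_eq_phase: "TN N \<kappa> n \<Psi> k = cis (TN_phase N \<kappa> n k) * \<Psi> (k - fst n)"
  by (simp add: TN_def TN_phase_def)

lemma TN_mult_cnj_TN:
  "TN N \<kappa> m \<Psi> k * cnj (TN N \<kappa> m' \<Phi> k)
    = cis (TN_phase N \<kappa> m k - TN_phase N \<kappa> m' k) * (\<Psi> (k - fst m) * cnj (\<Phi> (k - fst m')))"
proof -
  have "cis (TN_phase N \<kappa> m k - TN_phase N \<kappa> m' k) = cis (TN_phase N \<kappa> m k) * cnj (cis (TN_phase N \<kappa> m' k))"
    by (simp add: cis_cnj cis_mult)
  then show ?thesis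
    by (simp add: TN_eq_phase)
qed

lemma not_dvd_diff_if_small:
  fixes a b :: int
  assumes "2 * \<bar>a\<bar> < int N" "2 * \<bar>b\<bar> < int N" "a \<noteq> b"
  shows "\<not> int N dvd (a - b)"
proof
  assume "int N dvd (a - b)"
  then have "int N \<le> \<bar>a - b\<bar>"
    using assms(3) dvd_imp_le_int[of "a - b" "int N"] by simp
  moreover have "\<bar>a - b\<bar> \<le> \<bar>a\<bar> + \<bar>b\<bar>"
    by (rule abs_triangle_ineq4)
  ultimately show False
    using assms(1,2) by linarith
qed

lemma sum_cis_TN_phase_diff:
  assumes N: "N \<ge> 1" and fst: "fst m = fst m'" and snd: "snd m \<noteq> snd m'"
    and small: "2 * \<bar>snd m\<bar> < int N" "2 * \<bar>snd m'\<bar> < int N"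
  shows "(\<Sum>k\<in>{1..int N}. cis (TN_phase N \<kappa> m k - TN_phase N \<kappa> m' k)) = 0"
proof -
  define d where "d = snd m - snd m'"
  have d: "\<not> int N dvd d"
    unfolding d_def using small snd by (rule not_dvd_diff_if_small)
  define c0 where "c0 = cis (pi * (2 * of_int d * fst \<kappa> - of_int (fst m) * of_int d) / real N)"
  have "cis (TN_phase N \<kappa> m k - TN_phase N \<kappa> m' k) = c0 * cis (2 * pi * of_int d * of_int k / real N)" for k
  proof -
    have "TN_phase N \<kappa> m k - TN_phase N \<kappa> m' k
        = pi * (2 * of_int d * fst \<kappa> - of_int (fst m) * of_int d) / real N
          + 2 * pi * of_int d * of_int k / real N"
      using fst unfolding TN_phase_def d_def diff_divide_distrib[symmetric] add_divide_distrib[symmetric]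
      by (simp add: algebra_simps)
    then show ?thesis
      by (simp only: c0_def cis_mult)
  qed
  then have "(\<Sum>k\<in>{1..int N}. cis (TN_phase N \<kappa> m k - TN_phase N \<kappa> m' k))
      = c0 * (\<Sum>k\<in>{1..int N}. cis (2 * pi * of_int d * of_int k / real N))"
    by (simp add: sum_distrib_left)
  then show ?thesis
    by (simp only: sum_cis_roots_of_unity[OF N d] mult_zero_right)
qed

text \<open>The translations \<open>T\<^sub>N(m)\<close> with \<open>m\<close> in a box of side \<open>N\<close> are orthogonal for the
  Hilbert--Schmidt inner product \<open>tr (T\<^sub>N(m')\<^sup>* T\<^sub>N(m))\<close>, computed here in the eigenbasis.\<close>
lemma sum_inner_TN_eigenbasis:
  assumes N: "N \<ge> 1" and E: "is_eigenbasis N \<kappa> U \<phi>"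
    and m: "2 * \<bar>fst m\<bar> < int N" "2 * \<bar>snd m\<bar> < int N"
    and m': "2 * \<bar>fst m'\<bar> < int N" "2 * \<bar>snd m'\<bar> < int N"
  shows "(\<Sum>j\<in>{1..N}. inner_HN N (TN N \<kappa> m (\<phi> j)) (TN N \<kappa> m' (\<phi> j)))
    = (if m = m' then of_nat N else 0)"
proof -
  let ?c = "\<lambda>k. cis (TN_phase N \<kappa> m k - TN_phase N \<kappa> m' k)"
  let ?S = "\<lambda>k. \<Sum>j\<in>{1..N}. \<phi> j (k - fst m) * cnj (\<phi> j (k - fst m'))"
  have "(\<Sum>j\<in>{1..N}. inner_HN N (TN N \<kappa> m (\<phi> j)) (TN N \<kappa> m' (\<phi> j)))
      = (\<Sum>j\<in>{1..N}. \<Sum>k\<in>{1..int N}. ?c k * (\<phi> j (k - fst m) * cnj (\<phi> j (k - fst m')))) / of_nat N"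
    by (simp add: inner_HN_def TN_mult_cnj_TN sum_divide_distrib)
  also have "\<dots> = (\<Sum>k\<in>{1..int N}. ?c k * ?S k) / of_nat N"
    by (subst sum.swap) (simp add: sum_distrib_left)
  also have "\<dots> = (if m = m' then of_nat N else 0)"
  proof (cases "fst m = fst m'")
    case False
    have "?S k = 0" for k
    proof (rule eigenbasis_sum_off_diagonal[OF N E])
      have "\<not> int N dvd (k - fst m) - (k - fst m')"
        using not_dvd_diff_if_small[OF m'(1) m(1)] False by simp
      then show "(k - fst m) mod int N \<noteq> (k - fst m') mod int N"
        by (simp add: mod_eq_dvd_iff)
    qed
    then show ?thesis
      using False by auto
  next
    case True
    then have "?S k = of_nat N" for k
      using eigenbasis_sum_diagonal[OF N E, of "k - fst m"] by simp
    then have "(\<Sum>k\<in>{1..int N}. ?c k * ?S k) / of_nat N = (\<Sum>k\<in>{1..int N}. ?c k)"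
      using N by (simp flip: sum_distrib_right)
    also have "\<dots> = (if m = m' then of_nat N else 0)"
    proof (cases "snd m = snd m'")
      case True
      with \<open>fst m = fst m'\<close> have "m = m'"
        by (simp add: prod_eq_iff)
      then show ?thesis
        by simp
    next
      case False
      then have "m \<noteq> m'"
        by auto
      with sum_cis_TN_phase_diff[OF N \<open>fst m = fst m'\<close> False m(2) m'(2)] show ?thesis
        by (simp only: if_False)
    qed
    finally show ?thesis .
  qed
  finally show ?thesis .
qed

section \<open>Variance of matrix elements along orbits\<close>

lemma eigenbasis_variance_le:
  assumes N: "N \<ge> 1" and E: "is_eigenbasis N \<kappa> U \<phi>" and T: "T \<ge> 1"
    and small: "\<And>t. t < T \<Longrightarrow> 2 * \<bar>fst (m t)\<bar> < int N \<and> 2 * \<bar>snd (m t)\<bar> < int N"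
    and inj: "inj_on m {..<T}"
    and invariant: "\<And>j t. j \<in> {1..N} \<Longrightarrow> t < T \<Longrightarrow>
        inner_HN N (TN N \<kappa> (m t) (\<phi> j)) (\<phi> j) = inner_HN N (TN N \<kappa> n (\<phi> j)) (\<phi> j)"
  shows "(\<Sum>j\<in>{1..N}. (cmod (inner_HN N (TN N \<kappa> n (\<phi> j)) (\<phi> j)))\<^sup>2) \<le> real N / real T"
proof -
  let ?X = "\<lambda>j. cmod (inner_HN N (TN N \<kappa> n (\<phi> j)) (\<phi> j))"
  define u where "u j = (\<lambda>k. \<Sum>t<T. TN N \<kappa> (m t) (\<phi> j) k)" for j
  have pointwise: "(real T)\<^sup>2 * (?X j)\<^sup>2 \<le> Re (inner_HN N (u j) (u j))" if j: "j \<in> {1..N}" for j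
  proof -
    have "inner_HN N (u j) (\<phi> j) = of_nat T * inner_HN N (TN N \<kappa> n (\<phi> j)) (\<phi> j)"
      using invariant[OF j] by (simp add: u_def inner_HN_sum_left)
    then have "(real T)\<^sup>2 * (?X j)\<^sup>2 = (cmod (inner_HN N (u j) (\<phi> j)))\<^sup>2"
      by (simp add: norm_mult power_mult_distrib)
    also have "\<dots> \<le> Re (inner_HN N (u j) (u j)) * Re (inner_HN N (\<phi> j) (\<phi> j))"
      by (rule inner_HN_Cauchy_Schwarz)
    also have "\<dots> = Re (inner_HN N (u j) (u j))"
      using eigenbasis_normalized[OF E j] by simp
    finally show ?thesis .
  qed
  have "(\<Sum>j\<in>{1..N}. inner_HN N (u j) (u j))
      = (\<Sum>j\<in>{1..N}. \<Sum>t<T. \<Sum>t'<T. inner_HN N (TN N \<kappa> (m t) (\<phi> j)) (TN N \<kappa> (m t') (\<phi> j)))"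
    by (simp add: u_def inner_HN_sum_left inner_HN_sum_right)
  also have "\<dots> = (\<Sum>t<T. \<Sum>t'<T. \<Sum>j\<in>{1..N}. inner_HN N (TN N \<kappa> (m t) (\<phi> j)) (TN N \<kappa> (m t') (\<phi> j)))"
    by (subst sum.swap) (simp only: sum.swap[of _ "{1..N}"])
  also have "\<dots> = (\<Sum>t<T. \<Sum>t'<T. if t = t' then of_nat N else 0)"
  proof (intro sum.cong refl)
    fix t t' assume t: "t \<in> {..<T}" and t': "t' \<in> {..<T}"
    have "(\<Sum>j\<in>{1..N}. inner_HN N (TN N \<kappa> (m t) (\<phi> j)) (TN N \<kappa> (m t') (\<phi> j)))
        = (if m t = m t' then of_nat N else 0)"
      using small t t' by (intro sum_inner_TN_eigenbasis[OF N E]) auto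
    moreover have "m t = m t' \<longleftrightarrow> t = t'"
      using inj t t' by (auto dest: inj_onD)
    ultimately show "(\<Sum>j\<in>{1..N}. inner_HN N (TN N \<kappa> (m t) (\<phi> j)) (TN N \<kappa> (m t') (\<phi> j)))
        = (if t = t' then of_nat N else 0)"
      by simp
  qed
  also have "\<dots> = of_nat T * of_nat N"
    by simp
  finally have "(\<Sum>j\<in>{1..N}. Re (inner_HN N (u j) (u j))) = real T * real N"
    by (simp flip: Re_sum)
  moreover have "(\<Sum>j\<in>{1..N}. (real T)\<^sup>2 * (?X j)\<^sup>2) \<le> (\<Sum>j\<in>{1..N}. Re (inner_HN N (u j) (u j)))"
    by (rule sum_mono) (rule pointwise)
  ultimately have "(real T)\<^sup>2 * (\<Sum>j\<in>{1..N}. (?X j)\<^sup>2) \<le> real T * real N"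
    by (simp add: sum_distrib_left)
  then show ?thesis
    using T by (simp add: field_simps power2_eq_square)
qed

lemma eigenbasis_variance_cat_le:
  assumes N: "N \<ge> 1" and E: "is_eigenbasis N \<kappa> U \<phi>" and U: "is_quantum_cat A B C D' N \<kappa> U"
    and det: "A * D' - B * C = 1" and hyp: "\<bar>A + D'\<bar> > 2"
    and T: "T \<ge> 1" and n: "n \<noteq> 0"
    and small: "2 * (\<bar>A\<bar> + \<bar>B\<bar> + \<bar>C\<bar> + \<bar>D'\<bar>) ^ T * int_sup_norm n < int N"
  shows "(\<Sum>j\<in>{1..N}. (cmod (inner_HN N (TN N \<kappa> n (\<phi> j)) (\<phi> j)))\<^sup>2) \<le> real N / real T"
proof (rule eigenbasis_variance_le[OF N E T, where m = "cat_orbit A B C D' n"])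
  let ?L = "\<bar>A\<bar> + \<bar>B\<bar> + \<bar>C\<bar> + \<bar>D'\<bar>"
  fix t assume "t < T"
  have "1 \<le> ?L"
    using hyp by linarith
  have "int_sup_norm (cat_orbit A B C D' n t) \<le> ?L ^ t * int_sup_norm n"
    by (rule int_sup_norm_cat_orbit_le)
  also have "\<dots> \<le> ?L ^ T * int_sup_norm n"
    using \<open>1 \<le> ?L\<close> \<open>t < T\<close> by (intro mult_right_mono power_increasing) (auto simp: int_sup_norm_def)
  finally show "2 * \<bar>fst (cat_orbit A B C D' n t)\<bar> < int N \<and> 2 * \<bar>snd (cat_orbit A B C D' n t)\<bar> < int N"
    using small by (simp add: int_sup_norm_def)
next
  show "inj_on (cat_orbit A B C D' n) {..<T}"
    using inj_cat_orbit[OF det hyp n] by (rule inj_on_subset) simp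
next
  fix j t assume j: "j \<in> {1..N}"
  obtain \<mu> where "U (\<phi> j) = (\<lambda>k. \<mu> * \<phi> j k)"
    using E j unfolding is_eigenbasis_def by blast
  then show "inner_HN N (TN N \<kappa> (cat_orbit A B C D' n t) (\<phi> j)) (\<phi> j) = inner_HN N (TN N \<kappa> n (\<phi> j)) (\<phi> j)"
    by (rule inner_TN_cat_orbit_eigenvector[OF N U eigenbasis_in_HN[OF E j] eigenbasis_normalized[OF E j]])
qed

lemma abs_le_int_norm: "real_of_int \<bar>fst n\<bar> \<le> int_norm n" "real_of_int \<bar>snd n\<bar> \<le> int_norm n"
  unfolding int_norm_def by (simp_all add: real_le_rsqrt)

lemma int_sup_norm_le_int_norm: "real_of_int (int_sup_norm n) \<le> int_norm n"
  using abs_le_int_norm[of n] by (simp add: int_sup_norm_def)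

lemma disc_subset_square: "{n. int_norm n < R} \<subseteq> {- \<lceil>R\<rceil>..\<lceil>R\<rceil>} \<times> {- \<lceil>R\<rceil>..\<lceil>R\<rceil>}"
proof
  fix n assume "n \<in> {n. int_norm n < R}"
  then have "real_of_int \<bar>fst n\<bar> < R" "real_of_int \<bar>snd n\<bar> < R"
    using abs_le_int_norm[of n] by auto
  then show "n \<in> {- \<lceil>R\<rceil>..\<lceil>R\<rceil>} \<times> {- \<lceil>R\<rceil>..\<lceil>R\<rceil>}"
    by (cases n) (auto simp: abs_less_iff, linarith+)
qed

lemma finite_disc: "finite {n. int_norm n < R}"
  by (rule finite_subset[OF disc_subset_square]) auto

definition punctured_disc :: "real \<Rightarrow> (int \<times> int) set" where
  "punctured_disc R = {n. n \<noteq> 0 \<and> int_norm n < R}"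

lemma finite_punctured_disc: "finite (punctured_disc R)"
  by (rule finite_subset[OF _ finite_disc[of R]]) (auto simp: punctured_disc_def)

lemma card_punctured_disc_le: "real (card (punctured_disc R)) \<le> 9 * R\<^sup>2"
proof (cases "R \<le> 1")
  case True
  have "1 \<le> int_norm n" if "n \<noteq> 0" for n
    using that abs_le_int_norm[of n] by (cases n) (auto simp: zero_prod_def)
  then have "punctured_disc R = {}"
    using True by (force simp: punctured_disc_def)
  then show ?thesis
    by simp
next
  case False
  let ?k = "\<lceil>R\<rceil> - 1"
  have "punctured_disc R \<subseteq> {- ?k..?k} \<times> {- ?k..?k}"
  proof
    fix n assume "n \<in> punctured_disc R"
    then have "real_of_int \<bar>fst n\<bar> < R" "real_of_int \<bar>snd n\<bar> < R"
      using abs_le_int_norm[of n] by (auto simp: punctured_disc_def)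
    then have "\<bar>fst n\<bar> \<le> ?k" "\<bar>snd n\<bar> \<le> ?k"
      by linarith+
    then show "n \<in> {- ?k..?k} \<times> {- ?k..?k}"
      by (cases n) auto
  qed
  then have "card (punctured_disc R) \<le> card ({- ?k..?k} \<times> {- ?k..?k})"
    by (rule card_mono[rotated]) simp
  also have "\<dots> = nat (2 * ?k + 1) * nat (2 * ?k + 1)"
    by (simp add: card_cartesian_product)
  finally have "real (card (punctured_disc R)) \<le> real (nat (2 * ?k + 1) * nat (2 * ?k + 1))"
    by (simp only: of_nat_le_iff)
  also have "\<dots> = (2 * of_int ?k + 1)\<^sup>2"
    using False by (simp add: power2_eq_square of_nat_nat)
  also have "\<dots> \<le> (3 * R)\<^sup>2"
  proof (rule power_mono)
    have "real_of_int ?k = of_int \<lceil>R\<rceil> - 1"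
      by simp
    then show "2 * real_of_int ?k + 1 \<le> 3 * R" "0 \<le> 2 * real_of_int ?k + 1"
      using False of_int_ceiling_le_add_one[of R] le_of_int_ceiling[of R] by (simp_all, linarith+)
  qed
  finally show ?thesis
    by (simp add: power_mult_distrib)
qed

text \<open>The numbers \<open>\<langle>T\<^sub>N(n)\<psi>, \<psi>\<rangle>\<close> are the Fourier coefficients of the Wigner distribution of
  \<open>\<psi>\<close>; their sum over the frequencies \<open>0 < |n| < R\<close> measures how far \<open>\<psi>\<close> is from being
  equidistributed at scale \<open>1/R\<close>.\<close>
definition wigner_deviation :: "nat \<Rightarrow> real \<times> real \<Rightarrow> real \<Rightarrow> (int \<Rightarrow> complex) \<Rightarrow> real" where
  "wigner_deviation N \<kappa> R \<psi> = (\<Sum>n\<in>punctured_disc R. cmod (inner_HN N (TN N \<kappa> n \<psi>) \<psi>))"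

lemma wigner_deviation_nonneg: "0 \<le> wigner_deviation N \<kappa> R \<psi>"
  by (simp add: wigner_deviation_def sum_nonneg)

lemma sum_wigner_deviation_sq_le:
  assumes N: "N \<ge> 1" and E: "is_eigenbasis N \<kappa> U \<phi>" and U: "is_quantum_cat A B C D' N \<kappa> U"
    and det: "A * D' - B * C = 1" and hyp: "\<bar>A + D'\<bar> > 2" and T: "T \<ge> 1"
    and small: "2 * real_of_int (\<bar>A\<bar> + \<bar>B\<bar> + \<bar>C\<bar> + \<bar>D'\<bar>) ^ T * R \<le> real N"
  shows "(\<Sum>j\<in>{1..N}. (wigner_deviation N \<kappa> R (\<phi> j))\<^sup>2)
    \<le> real N * (real (card (punctured_disc R)))\<^sup>2 / real T"
proof -
  let ?a = "\<lambda>n j. cmod (inner_HN N (TN N \<kappa> n (\<phi> j)) (\<phi> j))"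
  let ?L = "\<bar>A\<bar> + \<bar>B\<bar> + \<bar>C\<bar> + \<bar>D'\<bar>"
  have variance: "(\<Sum>j\<in>{1..N}. (?a n j)\<^sup>2) \<le> real N / real T" if n: "n \<in> punctured_disc R" for n
  proof (rule eigenbasis_variance_cat_le[OF N E U det hyp T])
    show "n \<noteq> 0"
      using n by (simp add: punctured_disc_def)
    have "0 < real_of_int ?L ^ T"
      using hyp by simp
    moreover have "real_of_int (int_sup_norm n) < R"
      using n int_sup_norm_le_int_norm[of n] by (simp add: punctured_disc_def)
    ultimately have "2 * real_of_int ?L ^ T * real_of_int (int_sup_norm n) < 2 * real_of_int ?L ^ T * R"
      by simp
    then have "2 * real_of_int ?L ^ T * real_of_int (int_sup_norm n) < real N"
      using small by linarith
    then show "2 * ?L ^ T * int_sup_norm n < int N"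
      by (subst of_int_less_iff[where 'a = real, symmetric]) simp
  qed
  have "(\<Sum>j\<in>{1..N}. (wigner_deviation N \<kappa> R (\<phi> j))\<^sup>2)
      \<le> (\<Sum>j\<in>{1..N}. real (card (punctured_disc R)) * (\<Sum>n\<in>punctured_disc R. (?a n j)\<^sup>2))"
    unfolding wigner_deviation_def
    using Cauchy_Schwarz_ineq_sum[of "\<lambda>_. 1" _ "punctured_disc R"] by (intro sum_mono) simp
  also have "\<dots> = real (card (punctured_disc R)) * (\<Sum>n\<in>punctured_disc R. \<Sum>j\<in>{1..N}. (?a n j)\<^sup>2)"
    by (simp only: sum_distrib_left) (rule sum.swap)
  also have "\<dots> \<le> real (card (punctured_disc R)) * (\<Sum>n\<in>punctured_disc R. real N / real T)"
    by (intro mult_left_mono sum_mono variance) simp_all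
  also have "\<dots> = real N * (real (card (punctured_disc R)))\<^sup>2 / real T"
    by (simp add: power2_eq_square)
  finally show ?thesis .
qed

lemma inner_OpN_trig_shift_deviation:
  assumes normalized: "inner_HN N \<psi> \<psi> = 1" and R: "R > 0"
    and support: "\<And>n. R \<le> int_norm n \<Longrightarrow> a n = 0"
    and mean: "cmod (a 0 - v) \<le> e0" and bound: "\<And>n. cmod (a n) \<le> c"
  shows "cmod (inner_HN N (OpN N \<kappa> (trig_shift a x) \<psi>) \<psi> - v) \<le> e0 + c * wigner_deviation N \<kappa> R \<psi>"
proof -
  let ?g = "\<lambda>n. trig_shift a x n * inner_HN N (TN N \<kappa> n \<psi>) \<psi>"
  have support': "{n. trig_shift a x n \<noteq> 0} \<subseteq> insert 0 (punctured_disc R)"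
    using support by (force simp: trig_shift_def punctured_disc_def)
  have "inner_HN N (OpN N \<kappa> (trig_shift a x) \<psi>) \<psi> = (\<Sum>n\<in>{n. trig_shift a x n \<noteq> 0}. ?g n)"
    unfolding OpN_def by (simp add: inner_HN_sum_left inner_HN_mult_left)
  also have "\<dots> = (\<Sum>n\<in>insert 0 (punctured_disc R). ?g n)"
    by (rule sum.mono_neutral_left[OF _ support']) (auto simp: finite_punctured_disc)
  also have "\<dots> = ?g 0 + (\<Sum>n\<in>punctured_disc R. ?g n)"
    by (rule sum.insert[OF finite_punctured_disc]) (simp add: punctured_disc_def)
  also have "?g 0 = a 0"
  proof -
    have "wedge (ivec 0) x = 0"
      by (simp add: wedge_def ivec_def zero_prod_def)
    then show ?thesis
      by (simp add: trig_shift_def normalized)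
  qed
  finally have "inner_HN N (OpN N \<kappa> (trig_shift a x) \<psi>) \<psi> - v = (a 0 - v) + (\<Sum>n\<in>punctured_disc R. ?g n)"
    by simp
  then have "cmod (inner_HN N (OpN N \<kappa> (trig_shift a x) \<psi>) \<psi> - v)
      \<le> cmod (a 0 - v) + cmod (\<Sum>n\<in>punctured_disc R. ?g n)"
    by (simp only: norm_triangle_ineq)
  moreover have "cmod (\<Sum>n\<in>punctured_disc R. ?g n) \<le> c * wigner_deviation N \<kappa> R \<psi>"
  proof -
    have "cmod (\<Sum>n\<in>punctured_disc R. ?g n) \<le> (\<Sum>n\<in>punctured_disc R. cmod (?g n))"
      by (rule norm_sum)
    also have "\<dots> \<le> (\<Sum>n\<in>punctured_disc R. c * cmod (inner_HN N (TN N \<kappa> n \<psi>) \<psi>))"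
      using bound by (intro sum_mono) (simp add: trig_shift_def norm_mult mult_right_mono)
    finally show ?thesis
      by (simp add: wigner_deviation_def sum_distrib_left)
  qed
  ultimately show ?thesis
    using mean by linarith
qed

lemma card_exceeding_fourth_root_le:
  fixes e :: "'a \<Rightarrow> real"
  assumes J: "finite J" and nonneg: "\<And>j. j \<in> J \<Longrightarrow> 0 \<le> e j"
    and sum_sq: "(\<Sum>j\<in>J. (e j)\<^sup>2) \<le> M * V" and V: "0 \<le> V"
  shows "real (card {j\<in>J. sqrt (sqrt V) < e j}) \<le> M * sqrt V"
proof (cases "V = 0")
  case True
  then have "(\<Sum>j\<in>J. (e j)\<^sup>2) = 0"
    using sum_sq by (simp add: antisym sum_nonneg)
  then have "\<forall>j\<in>J. e j = 0"
    using J by (simp add: sum_nonneg_eq_0_iff)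
  then have "{j\<in>J. sqrt (sqrt V) < e j} = {}"
    using True by auto
  then show ?thesis
    using True by (simp only: card.empty of_nat_0 real_sqrt_zero mult_zero_right order_refl)
next
  case False
  let ?B = "{j\<in>J. sqrt (sqrt V) < e j}"
  have "real (card ?B) * sqrt V = (\<Sum>j\<in>?B. (sqrt (sqrt V))\<^sup>2)"
    using V by simp
  also have "\<dots> \<le> (\<Sum>j\<in>?B. (e j)\<^sup>2)"
    using V by (intro sum_mono power_mono) auto
  also have "\<dots> \<le> (\<Sum>j\<in>J. (e j)\<^sup>2)"
    using J by (intro sum_mono2) auto
  also have "\<dots> \<le> M * sqrt V * sqrt V"
    using sum_sq V by (simp add: mult.assoc)
  finally show ?thesis
    using False V by simp
qed

section \<open>Quantum ergodicity at logarithmic scales\<close>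

lemma card_small_wigner_deviation_ge:
  assumes N: "N \<ge> 1" and E: "is_eigenbasis N \<kappa> U \<phi>" and U: "is_quantum_cat A B C D' N \<kappa> U"
    and det: "A * D' - B * C = 1" and hyp: "\<bar>A + D'\<bar> > 2" and T: "T \<ge> 1"
    and small: "2 * real_of_int (\<bar>A\<bar> + \<bar>B\<bar> + \<bar>C\<bar> + \<bar>D'\<bar>) ^ T * R \<le> real N"
  defines "V \<equiv> (real (card (punctured_disc R)))\<^sup>2 / real T"
  shows "real N * (1 - sqrt V) \<le> real (card {j\<in>{1..N}. wigner_deviation N \<kappa> R (\<phi> j) \<le> sqrt (sqrt V)})"
proof -
  let ?good = "{j\<in>{1..N}. wigner_deviation N \<kappa> R (\<phi> j) \<le> sqrt (sqrt V)}"
  let ?bad = "{j\<in>{1..N}. sqrt (sqrt V) < wigner_deviation N \<kappa> R (\<phi> j)}"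
  have "(\<Sum>j\<in>{1..N}. (wigner_deviation N \<kappa> R (\<phi> j))\<^sup>2) \<le> real N * V"
    using sum_wigner_deviation_sq_le[OF N E U det hyp T small] by (simp add: V_def)
  then have "real (card ?bad) \<le> real N * sqrt V"
    by (intro card_exceeding_fourth_root_le) (simp_all add: wigner_deviation_nonneg V_def)
  moreover have "card ?good + card ?bad = N"
  proof -
    have "?good \<union> ?bad = {1..N}"
      by auto
    moreover have "card (?good \<union> ?bad) = card ?good + card ?bad"
      by (rule card_Un_disjoint) auto
    ultimately show ?thesis
      by simp
  qed
  ultimately show ?thesis
    by (simp add: algebra_simps)
qed

lemma eigenbasis_density_one_small_wigner_deviation:
  fixes R :: "nat \<Rightarrow> real" and T :: "nat \<Rightarrow> nat"
  assumes det: "A * D' - B * C = 1" and hyp: "\<bar>A + D'\<bar> > 2"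
    and quant: "\<And>N. N \<ge> 1 \<Longrightarrow> is_quantum_cat A B C D' N (\<kappa> N) (U N)"
    and eig: "\<And>N. N \<ge> 1 \<Longrightarrow> is_eigenbasis N (\<kappa> N) (U N) (\<phi> N)"
    and orbit: "\<forall>\<^sub>F N in sequentially.
      1 \<le> T N \<and> 2 * real_of_int (\<bar>A\<bar> + \<bar>B\<bar> + \<bar>C\<bar> + \<bar>D'\<bar>) ^ T N * R N \<le> real N"
    and long: "(\<lambda>N. R N ^ 4 / real (T N)) \<longlonglongrightarrow> 0"
  obtains S \<rho> where "\<And>N. S N \<subseteq> {1..N}" "(\<lambda>N. real (card (S N)) / real N) \<longlonglongrightarrow> 1"
    "\<rho> \<longlonglongrightarrow> 0" "\<And>N j. j \<in> S N \<Longrightarrow> wigner_deviation N (\<kappa> N) (R N) (\<phi> N j) \<le> \<rho> N"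
proof
  define V where "V N = (real (card (punctured_disc (R N))))\<^sup>2 / real (T N)" for N
  define S where "S N = {j\<in>{1..N}. wigner_deviation N (\<kappa> N) (R N) (\<phi> N j) \<le> sqrt (sqrt (V N))}" for N
  show "S N \<subseteq> {1..N}" for N
    by (auto simp: S_def)
  show "wigner_deviation N (\<kappa> N) (R N) (\<phi> N j) \<le> sqrt (sqrt (V N))" if "j \<in> S N" for N j
    using that by (simp add: S_def)
  have V_nonneg: "0 \<le> V N" for N
    by (simp add: V_def)
  have V_le: "V N \<le> 81 * (R N ^ 4 / real (T N))" for N
  proof -
    have "(real (card (punctured_disc (R N))))\<^sup>2 \<le> (9 * (R N)\<^sup>2)\<^sup>2"
      by (intro power_mono card_punctured_disc_le) simp
    then have "V N \<le> (9 * (R N)\<^sup>2)\<^sup>2 / real (T N)"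
      unfolding V_def by (rule divide_right_mono) simp
    also have "(9 * (R N)\<^sup>2)\<^sup>2 = 81 * R N ^ 4"
      by (simp add: power2_eq_square power4_eq_xxxx algebra_simps)
    finally show ?thesis
      by simp
  qed
  have V: "V \<longlonglongrightarrow> 0"
    by (rule tendsto_sandwich[OF _ _ tendsto_const tendsto_mult_right_zero[OF long, of 81]])
      (simp_all only: V_nonneg V_le eventually_True)
  then show "(\<lambda>N. sqrt (sqrt (V N))) \<longlonglongrightarrow> 0"
    using tendsto_real_sqrt[OF tendsto_real_sqrt[OF V]] by simp
  have "\<forall>\<^sub>F N in sequentially. 1 - sqrt (V N) \<le> real (card (S N)) / real N"
    using orbit eventually_ge_at_top[of 1]
  proof eventually_elim
    case (elim N)
    then have N: "N \<ge> 1"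
      by simp
    have "real N * (1 - sqrt (V N)) \<le> real (card (S N))"
      using card_small_wigner_deviation_ge[OF N eig[OF N] quant[OF N] det hyp] elim
      by (simp add: S_def V_def)
    then show ?case
      using N by (simp add: field_simps)
  qed
  moreover have "\<forall>\<^sub>F N in sequentially. real (card (S N)) / real N \<le> 1"
    using eventually_ge_at_top[of 1]
  proof eventually_elim
    case (elim N)
    have "card (S N) \<le> card {1..N}"
      by (rule card_mono) (auto simp: S_def)
    then show ?case
      using elim by simp
  qed
  moreover have "(\<lambda>N. 1 - sqrt (V N)) \<longlonglongrightarrow> 1"
    using tendsto_diff[OF tendsto_const tendsto_real_sqrt[OF V]] by simp
  ultimately show "(\<lambda>N. real (card (S N)) / real N) \<longlonglongrightarrow> 1"
    by (rule tendsto_sandwich) simp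
qed

lemma inner_OpN_majorant_deviation:
  assumes normalized: "inner_HN N \<psi> \<psi> = 1" and D: "0 < D" and r: "0 \<le> r"
    and support: "\<And>n. D \<le> int_norm n \<Longrightarrow> b n = 0"
    and mean: "cmod (b 0 - complex_of_real (torus_vol 0 r)) \<le> C * r / D"
    and bound: "\<And>n. cmod (b n) \<le> c * r\<^sup>2"
    and deviation: "wigner_deviation N \<kappa> D \<psi> \<le> \<rho>"
  shows "cmod (inner_HN N (OpN N \<kappa> (trig_shift b x) \<psi>) \<psi> - complex_of_real (torus_vol x r))
    \<le> \<bar>C\<bar> * (r / D) + \<bar>c\<bar> * \<rho> * r\<^sup>2"
proof -
  have "cmod (inner_HN N (OpN N \<kappa> (trig_shift b x) \<psi>) \<psi> - complex_of_real (torus_vol x r))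
      \<le> C * r / D + c * r\<^sup>2 * wigner_deviation N \<kappa> D \<psi>"
    unfolding torus_vol_translate[of x]
    by (rule inner_OpN_trig_shift_deviation[where a = b, OF normalized D support mean bound])
  also have "C * r / D \<le> \<bar>C\<bar> * (r / D)"
    using mult_right_mono[OF abs_ge_self[of C], of "r / D"] D r by simp
  also have "c * r\<^sup>2 * wigner_deviation N \<kappa> D \<psi> \<le> \<bar>c\<bar> * \<rho> * r\<^sup>2"
  proof -
    have "0 \<le> c * r\<^sup>2"
      using bound[of 0] norm_ge_zero order_trans by blast
    then have "c * r\<^sup>2 * wigner_deviation N \<kappa> D \<psi> \<le> c * r\<^sup>2 * \<rho>"
      by (rule mult_left_mono[OF deviation])
    also have "\<dots> \<le> \<bar>c\<bar> * r\<^sup>2 * \<rho>"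
      using deviation wigner_deviation_nonneg[of N \<kappa> D \<psi>] by (intro mult_right_mono) simp_all
    also have "\<dots> = \<bar>c\<bar> * \<rho> * r\<^sup>2"
      by (simp only: mult_ac)
    finally show ?thesis .
  qed
  finally show ?thesis
    by simp
qed

lemma eventually_majorant_error_le:
  fixes r D \<rho> :: "nat \<Rightarrow> real"
  assumes D_large: "(\<lambda>N. 1 / D N) \<in> o(r)" and \<rho>: "\<rho> \<longlonglongrightarrow> 0"
    and D_pos: "\<And>N. 0 < D N" and r_nonneg: "\<And>N. 0 \<le> r N" and \<epsilon>: "0 < \<epsilon>"
  shows "\<forall>\<^sub>F N in sequentially. \<bar>C\<bar> * (r N / D N) + \<bar>c\<bar> * \<rho> N * (r N)\<^sup>2 \<le> \<epsilon> * (r N)\<^sup>2"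
proof -
  have "(\<lambda>N. 1 / D N * r N) \<in> o(\<lambda>N. r N * r N)"
    using D_large landau_o.big_refl by (rule landau_o.small_big_mult)
  then have "\<forall>\<^sub>F N in sequentially. norm (1 / D N * r N) \<le> \<epsilon> / (2 * (\<bar>C\<bar> + 1)) * norm (r N * r N)"
    using \<epsilon> by (intro landau_o.smallD) (simp_all add: add_pos_nonneg)
  moreover have "\<forall>\<^sub>F N in sequentially. \<bar>c\<bar> * \<rho> N < \<epsilon> / 2"
    using order_tendstoD(2)[OF tendsto_mult_right_zero[OF \<rho>, of "\<bar>c\<bar>"], of "\<epsilon> / 2"] \<epsilon> by simp
  ultimately show ?thesis
  proof eventually_elim
    case (elim N)
    have "r N / D N \<le> \<epsilon> / (2 * (\<bar>C\<bar> + 1)) * (r N)\<^sup>2"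
      using elim(1) D_pos[of N] r_nonneg[of N] by (simp add: power2_eq_square)
    then have "\<bar>C\<bar> * (r N / D N) \<le> \<bar>C\<bar> * (\<epsilon> / (2 * (\<bar>C\<bar> + 1))) * (r N)\<^sup>2"
      unfolding mult.assoc by (rule mult_left_mono) simp
    also have "\<dots> \<le> \<epsilon> / 2 * (r N)\<^sup>2"
    proof (rule mult_right_mono)
      show "\<bar>C\<bar> * (\<epsilon> / (2 * (\<bar>C\<bar> + 1))) \<le> \<epsilon> / 2"
        using \<epsilon> by (simp add: field_simps)
    qed simp
    moreover have "\<bar>c\<bar> * \<rho> N * (r N)\<^sup>2 \<le> \<epsilon> / 2 * (r N)\<^sup>2"
      using elim(2) by (intro mult_right_mono) simp_all
    ultimately show ?case
      by linarith
  qed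
qed

lemma quantum_ergodicity_at_scale:
  fixes r D :: "nat \<Rightarrow> real" and T :: "nat \<Rightarrow> nat"
  assumes det: "A * D' - B * C = 1" and hyp: "\<bar>A + D'\<bar> > 2"
    and quant: "\<And>N. N \<ge> 1 \<Longrightarrow> is_quantum_cat A B C D' N (\<kappa> N) (U N)"
    and eig: "\<And>N. N \<ge> 1 \<Longrightarrow> is_eigenbasis N (\<kappa> N) (U N) (\<phi> N)"
    and r_nonneg: "\<And>N. 0 \<le> r N" and D_pos: "\<And>N. 0 < D N" and D_large: "(\<lambda>N. 1 / D N) \<in> o(r)"
    and orbit: "\<forall>\<^sub>F N in sequentially.
      1 \<le> T N \<and> 2 * real_of_int (\<bar>A\<bar> + \<bar>B\<bar> + \<bar>C\<bar> + \<bar>D'\<bar>) ^ T N * D N \<le> real N"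
    and long: "(\<lambda>N. D N ^ 4 / real (T N)) \<longlonglongrightarrow> 0"
    and adm: "admissible_majorants r D ap am"
  shows "\<exists>S :: nat \<Rightarrow> nat set. (\<forall>N. S N \<subseteq> {1..N}) \<and>
     (\<lambda>N. real (card (S N)) / real N) \<longlonglongrightarrow> 1 \<and>
     (\<forall>b \<in> {ap, am}. \<forall>\<epsilon>>0. \<forall>\<^sub>F N in sequentially. \<forall>x. \<forall>j\<in>S N.
        cmod (inner_HN N (OpN N (\<kappa> N) (trig_shift (b N) x) (\<phi> N j)) (\<phi> N j)
              - complex_of_real (torus_vol x (r N))) \<le> \<epsilon> * (r N)\<^sup>2)"
proof -
  obtain S \<rho> where S: "\<And>N. S N \<subseteq> {1..N}" "(\<lambda>N. real (card (S N)) / real N) \<longlonglongrightarrow> 1"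
    and \<rho>: "\<rho> \<longlonglongrightarrow> 0" and deviation: "\<And>N j. j \<in> S N \<Longrightarrow> wigner_deviation N (\<kappa> N) (D N) (\<phi> N j) \<le> \<rho> N"
    using eigenbasis_density_one_small_wigner_deviation[OF det hyp quant eig orbit long] by blast
  obtain c C where majorant: "\<And>N. 1 \<le> r N * D N \<Longrightarrow>
      (\<forall>n. D N \<le> int_norm n \<longrightarrow> ap N n = 0 \<and> am N n = 0) \<and>
      cmod (ap N 0 - complex_of_real (torus_vol 0 (r N))) \<le> C * r N / D N \<and>
      cmod (am N 0 - complex_of_real (torus_vol 0 (r N))) \<le> C * r N / D N \<and>
      (\<forall>n. cmod (ap N n) \<le> c * (r N)\<^sup>2 \<and> cmod (am N n) \<le> c * (r N)\<^sup>2)"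
    using adm unfolding admissible_majorants_def by blast
  have rD: "\<forall>\<^sub>F N in sequentially. 1 \<le> r N * D N"
    using landau_o.smallD[OF D_large zero_less_one]
  proof eventually_elim
    case (elim N)
    then show ?case
      using D_pos[of N] r_nonneg[of N] by (simp add: divide_le_eq mult.commute)
  qed
  have "\<forall>\<^sub>F N in sequentially. \<forall>x. \<forall>j\<in>S N.
      cmod (inner_HN N (OpN N (\<kappa> N) (trig_shift (b N) x) (\<phi> N j)) (\<phi> N j)
        - complex_of_real (torus_vol x (r N))) \<le> \<epsilon> * (r N)\<^sup>2"
    if b: "b \<in> {ap, am}" and \<epsilon>: "\<epsilon> > 0" for b \<epsilon>
    using rD eventually_majorant_error_le[OF D_large \<rho> D_pos r_nonneg \<epsilon>, of C c]
  proof eventually_elim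
    case (elim N)
    show ?case
    proof (intro allI ballI)
      fix x j assume j: "j \<in> S N"
      then have "N \<ge> 1" "j \<in> {1..N}"
        using S(1)[of N] by auto
      then have "inner_HN N (\<phi> N j) (\<phi> N j) = 1"
        using eig eigenbasis_normalized by blast
      then have "cmod (inner_HN N (OpN N (\<kappa> N) (trig_shift (b N) x) (\<phi> N j)) (\<phi> N j)
          - complex_of_real (torus_vol x (r N))) \<le> \<bar>C\<bar> * (r N / D N) + \<bar>c\<bar> * \<rho> N * (r N)\<^sup>2"
        using majorant[OF elim(1)] b deviation[OF j]
        by (intro inner_OpN_majorant_deviation[OF _ D_pos r_nonneg]) auto
      with elim(2) show "cmod (inner_HN N (OpN N (\<kappa> N) (trig_shift (b N) x) (\<phi> N j)) (\<phi> N j)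
          - complex_of_real (torus_vol x (r N))) \<le> \<epsilon> * (r N)\<^sup>2"
        by linarith
    qed
  qed
  then show ?thesis
    using S by blast
qed

lemma power_nat_floor_log_le_sqrt:
  fixes L x :: real
  assumes L: "1 < L" and x: "1 \<le> x"
  shows "L ^ nat \<lfloor>ln x / (2 * ln L)\<rfloor> \<le> sqrt x"
proof -
  let ?t = "nat \<lfloor>ln x / (2 * ln L)\<rfloor>"
  have "0 \<le> ln x / (2 * ln L)"
    using L x by simp
  then have "real ?t \<le> ln x / (2 * ln L)"
    by (simp add: of_nat_nat)
  then have "real ?t * ln L \<le> ln x / 2"
    using L by (simp add: field_simps)
  then have "ln (L ^ ?t) \<le> ln (sqrt x)"
    using L x by (simp add: ln_realpow ln_sqrt)
  then show ?thesis
    using L x by simp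
qed

lemma eventually_log_time_orbit_bound:
  fixes L \<beta> :: real
  assumes L: "1 < L" and \<beta>: "0 < \<beta>" "\<beta> < 1/4"
  shows "\<forall>\<^sub>F N in sequentially. 1 \<le> nat \<lfloor>ln (real N) / (2 * ln L)\<rfloor> \<and>
    2 * L ^ nat \<lfloor>ln (real N) / (2 * ln L)\<rfloor> * max 1 (ln (real N) powr \<beta>) \<le> real N"
proof -
  have "\<forall>\<^sub>F N in sequentially. 2 \<le> ln (real N) / (2 * ln L)"
    using L by real_asymp
  moreover have "\<forall>\<^sub>F N in sequentially. 2 * sqrt (real N) * max 1 (ln (real N) powr \<beta>) \<le> real N"
    using \<beta> by real_asymp
  moreover have "\<forall>\<^sub>F N in sequentially. 1 \<le> N"
    by (rule eventually_ge_at_top)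
  ultimately show ?thesis
  proof eventually_elim
    case (elim N)
    have "L ^ nat \<lfloor>ln (real N) / (2 * ln L)\<rfloor> \<le> sqrt (real N)"
      using elim(3) by (intro power_nat_floor_log_le_sqrt[OF L]) simp
    then have "2 * L ^ nat \<lfloor>ln (real N) / (2 * ln L)\<rfloor> * max 1 (ln (real N) powr \<beta>)
        \<le> 2 * sqrt (real N) * max 1 (ln (real N) powr \<beta>)"
      by (intro mult_right_mono) simp_all
    moreover have "1 \<le> nat \<lfloor>ln (real N) / (2 * ln L)\<rfloor>"
      using elim(1) by (simp add: le_nat_iff le_floor_iff)
    ultimately show ?case
      using elim(2) by simp
  qed
qed

lemma disc_size_over_log_time_tendsto_0:
  fixes L \<beta> :: real
  assumes L: "1 < L" and \<beta>: "0 < \<beta>" "\<beta> < 1/4"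
  shows "(\<lambda>N. max 1 (ln (real N) powr \<beta>) ^ 4 / real (nat \<lfloor>ln (real N) / (2 * ln L)\<rfloor>)) \<longlonglongrightarrow> 0"
proof (rule tendsto_sandwich[OF _ _ tendsto_const])
  show "\<forall>\<^sub>F N in sequentially. 0 \<le> max 1 (ln (real N) powr \<beta>) ^ 4 / real (nat \<lfloor>ln (real N) / (2 * ln L)\<rfloor>)"
    by simp
  have "\<forall>\<^sub>F N in sequentially. 2 \<le> ln (real N) / (2 * ln L)"
    using L by real_asymp
  then show "\<forall>\<^sub>F N in sequentially. max 1 (ln (real N) powr \<beta>) ^ 4 / real (nat \<lfloor>ln (real N) / (2 * ln L)\<rfloor>)
      \<le> max 1 (ln (real N) powr \<beta>) ^ 4 / (ln (real N) / (2 * ln L) - 1)"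
  proof eventually_elim
    case (elim N)
    have "ln (real N) / (2 * ln L) - 1 \<le> real (nat \<lfloor>ln (real N) / (2 * ln L)\<rfloor>)"
      using elim by (simp add: of_nat_nat)
    then show ?case
      using elim by (intro divide_left_mono) simp_all
  qed
  show "(\<lambda>N. max 1 (ln (real N) powr \<beta>) ^ 4 / (ln (real N) / (2 * ln L) - 1)) \<longlonglongrightarrow> 0"
    using L \<beta> by real_asymp
qed

theorem theorem1p2:
  fixes A B C D' :: int and \<alpha> :: real
    and \<kappa> :: "nat \<Rightarrow> real \<times> real"
    and U :: "nat \<Rightarrow> (int \<Rightarrow> complex) \<Rightarrow> (int \<Rightarrow> complex)"
  assumes det: "A * D' - B * C = 1"
    and hyp: "\<bar>A + D'\<bar> > 2"
    and ham: "\<exists>\<alpha>0 \<beta> \<gamma> :: real. \<gamma>^2 > \<alpha>0 * \<beta> \<and>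
              mat_exp (mat22 \<gamma> \<beta> (- \<alpha>0) (- \<gamma>)) = mat22 (of_int A) (of_int B) (of_int C) (of_int D')"
    and quant: "\<And>N. N \<ge> 1 \<Longrightarrow> is_quantum_cat A B C D' N (\<kappa> N) (U N)"
    and alpha: "0 \<le> \<alpha>" "\<alpha> < 1/4"
  defines "r \<equiv> (\<lambda>N::nat. ln (real N) powr (- \<alpha>))"
  shows "\<exists>D :: nat \<Rightarrow> real. (\<forall>N. D N > 0) \<and> (\<lambda>N. 1 / D N) \<in> o(r) \<and>
     (\<forall>ap am. admissible_majorants r D ap am \<longrightarrow>
       (\<forall>\<phi> :: nat \<Rightarrow> nat \<Rightarrow> int \<Rightarrow> complex.
          (\<forall>N. N \<ge> 1 \<longrightarrow> is_eigenbasis N (\<kappa> N) (U N) (\<phi> N)) \<longrightarrow>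
          (\<exists>S :: nat \<Rightarrow> nat set. (\<forall>N. S N \<subseteq> {1..N}) \<and>
             (\<lambda>N. real (card (S N)) / real N) \<longlonglongrightarrow> 1 \<and>
             (\<forall>b \<in> {ap, am}. \<forall>\<epsilon>>0. \<forall>\<^sub>F N in sequentially. \<forall>x. \<forall>j\<in>S N.
                cmod (inner_HN N (OpN N (\<kappa> N) (trig_shift (b N) x) (\<phi> N j)) (\<phi> N j)
                      - complex_of_real (torus_vol x (r N))) \<le> \<epsilon> * (r N)^2))))"
proof -
  define \<beta> where "\<beta> = (\<alpha> + 1/4) / 2"
  have \<beta>: "0 < \<beta> - \<alpha>" "0 < \<beta>" "\<beta> < 1/4"
    using alpha by (simp_all add: \<beta>_def)
  define L where "L = real_of_int (\<bar>A\<bar> + \<bar>B\<bar> + \<bar>C\<bar> + \<bar>D'\<bar>)"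
  have L: "1 < L"
    using hyp unfolding L_def by linarith
  define D where "D = (\<lambda>N::nat. max 1 (ln (real N) powr \<beta>))"
  define T where "T = (\<lambda>N::nat. nat \<lfloor>ln (real N) / (2 * ln L)\<rfloor>)"
  have D_large: "(\<lambda>N. 1 / D N) \<in> o(r)"
    unfolding r_def D_def using \<beta> by real_asymp
  have orbit: "\<forall>\<^sub>F N in sequentially.
      1 \<le> T N \<and> 2 * real_of_int (\<bar>A\<bar> + \<bar>B\<bar> + \<bar>C\<bar> + \<bar>D'\<bar>) ^ T N * D N \<le> real N"
    unfolding T_def D_def L_def[symmetric] by (rule eventually_log_time_orbit_bound[OF L \<beta>(2,3)])
  have long: "(\<lambda>N. D N ^ 4 / real (T N)) \<longlonglongrightarrow> 0"
    unfolding T_def D_def by (rule disc_size_over_log_time_tendsto_0[OF L \<beta>(2,3)])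
  show ?thesis
  proof (intro exI[of _ D] conjI allI impI)
    show D_pos: "D N > 0" for N
      by (simp add: D_def)
    show "(\<lambda>N. 1 / D N) \<in> o(r)"
      by (rule D_large)
    fix ap am and \<phi> :: "nat \<Rightarrow> nat \<Rightarrow> int \<Rightarrow> complex"
    assume adm: "admissible_majorants r D ap am"
      and eig: "\<forall>N. N \<ge> 1 \<longrightarrow> is_eigenbasis N (\<kappa> N) (U N) (\<phi> N)"
    have r_nonneg: "0 \<le> r N" for N
      by (simp add: r_def)
    have eig': "is_eigenbasis N (\<kappa> N) (U N) (\<phi> N)" if "N \<ge> 1" for N
      using eig that by blast
    show "\<exists>S. (\<forall>N. S N \<subseteq> {1..N}) \<and> (\<lambda>N. real (card (S N)) / real N) \<longlonglongrightarrow> 1 \<and>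
        (\<forall>b \<in> {ap, am}. \<forall>\<epsilon>>0. \<forall>\<^sub>F N in sequentially. \<forall>x. \<forall>j\<in>S N.
          cmod (inner_HN N (OpN N (\<kappa> N) (trig_shift (b N) x) (\<phi> N j)) (\<phi> N j)
            - complex_of_real (torus_vol x (r N))) \<le> \<epsilon> * (r N)^2)"
      by (rule quantum_ergodicity_at_scale[OF det hyp quant eig' r_nonneg D_pos D_large orbit long adm])
  qed
qed

end
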